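(* Let $a\ge0$ and $\mathfrak g=\mathfrak r'_{3,a}$ (basis $\{e_1,e_2,e_3\}$, nonzero brackets $[e_1,e_2]=ae_2-e_3$, $[e_1,e_3]=e_2+ae_3$). Consider the action of $\mathbb R^\times\mathrm{Aut}(\mathfrak g)$ on $\mathrm{GL}_3(\mathbb R)/\mathrm{O}(3)$ with the natural Riemannian metric, and let $\langle\cdot,\cdot\rangle_0$ be the inner product making $\{e_1,e_2,e_3\}$ orthonormal. Then (1) the action is of cohomogeneity one, and $(\mathbb R^\times\mathrm{Aut}(\mathfrak g)).\langle\cdot,\cdot\rangle_0$ is the unique singular orbit; (2) $(\mathbb R^\times\mathrm{Aut}(\mathfrak g)).\langle\cdot,\cdot\rangle_0$ is the unique minimal orbit.
   Context: Identify $\mathfrak g\cong\mathbb R^3$ via the basis. $\mathrm{GL}_3(\mathbb R)/\mathrm{O}(3)$ is identified with the set of inner products on $\mathfrak g$ via $g.\langle\cdot,\cdot\rangle=\langle g^{-1}\cdot,g^{-1}\cdot\rangle$ (base point $\langle\cdot,\cdot\rangle_0$). The natural Riemannian metric is the $\mathrm{GL}_3(\mathbb R)$-invariant metric corresponding to $\langle X,Y\rangle=\mathrm{tr}(XY)$ on $\mathrm{sym}(3)$ (reductive complement $\mathfrak{gl}_3=\mathfrak o(3)\oplus\mathrm{sym}(3)$). $\mathbb R^\times\mathrm{Aut}(\mathfrak g)=\{c\varphi:c\ne0,\ \varphi\in\mathrm{Aut}(\mathfrak g)\}\subset\mathrm{GL}_3(\mathbb R)$ acts by restriction. For an isometric action,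 orbits of maximal dimension are regular and the others singular; the action is of cohomogeneity one if regular orbits have codimension one. An orbit is minimal if its mean curvature vector vanishes. *)

theory Defs
  imports "HOL-Analysis.Analysis"
begin

type_synonym vec3 = "real^3"
type_synonym mat3 = "real^3^3"

definition e1 :: vec3 where "e1 = axis 1 1"
definition e2 :: vec3 where "e2 = axis 2 1"
definition e3 :: vec3 where "e3 = axis 3 1"

text \<open>The Lie bracket of r'_{3,a}: the bilinear, antisymmetric extension of
  [e1,e2] = a e2 - e3, [e1,e3] = e2 + a e3, [e2,e3] = 0.\<close>
definition br :: "real \<Rightarrow> vec3 \<Rightarrow> vec3 \<Rightarrow> vec3" where
  "br a x y =
     (x$1 * y$2 - x$2 * y$1) *\<^sub>R (a *\<^sub>R e2 - e3)
   + (x$1 * y$3 - x$3 * y$1) *\<^sub>R (e2 + a *\<^sub>R e3)"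

definition Aut :: "real \<Rightarrow> mat3 set" where
  "Aut a = {\<phi>. invertible \<phi> \<and>
             (\<forall>x y. \<phi> *v br a x y = br a (\<phi> *v x) (\<phi> *v y))}"

definition RAut :: "real \<Rightarrow> mat3 set" where
  "RAut a = {c *\<^sub>R \<phi> | c \<phi>. c \<noteq> 0 \<and> \<phi> \<in> Aut a}"

text \<open>Inner products on R^3, represented by their Gram matrices P,
  i.e. <x,y>_P = x . (P y).  This is the space GL_3(R)/O(3).\<close>
definition PD :: "mat3 set" where
  "PD = {P. transpose P = P \<and> (\<forall>x. x \<noteq> 0 \<longrightarrow> x \<bullet> (P *v x) > 0)}"

text \<open>Symmetric matrices: the ambient vector space containing PD as an open subset.\<close>
definition Sym :: "mat3 set" where
  "Sym = {X. transpose X = X}"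

text \<open>g.<.,.> = <g^{-1}.,g^{-1}.>, in Gram matrix form.\<close>
definition act :: "mat3 \<Rightarrow> mat3 \<Rightarrow> mat3" where
  "act g P = transpose (matrix_inv g) ** P ** matrix_inv g"

definition orbit :: "real \<Rightarrow> mat3 \<Rightarrow> mat3 set" where
  "orbit a P = {act g P | g. g \<in> RAut a}"

text \<open>The natural GL_3(R)-invariant Riemannian metric on PD (corresponding to
  tr(XY) on sym(3)): g_P(V,W) = 1/4 tr(P^{-1} V P^{-1} W).\<close>
definition gmet :: "mat3 \<Rightarrow> mat3 \<Rightarrow> mat3 \<Rightarrow> real" where
  "gmet P V W = trace (matrix_inv P ** V ** matrix_inv P ** W) / 4"

text \<open>Covariant acceleration (Levi-Civita connection of gmet) of a curve
  with position P, velocity V and ordinary second derivative A: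
  D_t gamma' = gamma'' - gamma' gamma^{-1} gamma'.\<close>
definition cov_acc :: "mat3 \<Rightarrow> mat3 \<Rightarrow> mat3 \<Rightarrow> mat3" where
  "cov_acc P V A = A - V ** matrix_inv P ** V"

text \<open>Tangent space at Q of a subset S (used for the orbits, which are embedded
  submanifolds): span of velocities of curves in S through Q.\<close>
definition tangent_space :: "mat3 set \<Rightarrow> mat3 \<Rightarrow> mat3 set" where
  "tangent_space S Q = span {v. \<exists>\<gamma>. (\<forall>t. \<gamma> t \<in> S) \<and> \<gamma> 0 = Q \<and>
                                  (\<gamma> has_vector_derivative v) (at 0)}"

definition orbit_dim :: "real \<Rightarrow> mat3 \<Rightarrow> nat" where
  "orbit_dim a P = dim (tangent_space (orbit a P) P)"

definition max_orbit_dim :: "real \<Rightarrow> nat" where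
  "max_orbit_dim a = Max {orbit_dim a P | P. P \<in> PD}"

definition regular_orbit :: "real \<Rightarrow> mat3 \<Rightarrow> bool" where
  "regular_orbit a P \<longleftrightarrow> orbit_dim a P = max_orbit_dim a"

definition singular_orbit :: "real \<Rightarrow> mat3 \<Rightarrow> bool" where
  "singular_orbit a P \<longleftrightarrow> orbit_dim a P < max_orbit_dim a"

definition cohomogeneity_one :: "real \<Rightarrow> bool" where
  "cohomogeneity_one a \<longleftrightarrow> max_orbit_dim a + 1 = dim Sym"

text \<open>Minimality of a submanifold S of PD: the mean curvature vector vanishes at
  every point Q, i.e. for every g_Q-orthonormal basis E_0..E_{k-1} of T_Q S and
  every choice of C^2 curves gamma_i in S with gamma_i(0) = Q, gamma_i'(0) = E_i,
  the normal component of sum_i (D_t gamma_i')(0) vanishes, i.e. this sum lies in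
  T_Q S.\<close>
definition minimal_submfd :: "mat3 set \<Rightarrow> bool" where
  "minimal_submfd S \<longleftrightarrow>
    (\<forall>Q \<in> S. \<forall>(E :: nat \<Rightarrow> mat3) (\<gamma> :: nat \<Rightarrow> real \<Rightarrow> mat3)
        (\<gamma>' :: nat \<Rightarrow> real \<Rightarrow> mat3) (A :: nat \<Rightarrow> mat3).
      let T = tangent_space S Q; k = dim T in
      ((\<forall>i<k. E i \<in> T) \<and> span (E ` {..<k}) = T \<and>
       (\<forall>i<k. \<forall>j<k. gmet Q (E i) (E j) = (if i = j then 1 else 0)) \<and>
       (\<forall>i<k. (\<forall>t. \<gamma> i t \<in> S) \<and> \<gamma> i 0 = Q \<and>
              (\<forall>t. (\<gamma> i has_vector_derivative \<gamma>' i t) (at t)) \<and>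
              \<gamma>' i 0 = E i \<and>
              (\<gamma>' i has_vector_derivative A i) (at 0)))
      \<longrightarrow> (\<Sum>i<k. cov_acc Q (E i) (A i)) \<in> T)"

end

theory Submission
  imports Defs
begin

text \<open>
  Every automorphism of r'_{3,a} preserves the derived algebra span {e2, e3} and acts on it
  conformally; conversely, every map fixing e1 modulo span {e2, e3} and acting on span {e2, e3}
  by a rotation-dilation is an automorphism. Acting on Gram matrices by congruence, the group
  R^x Aut(g) therefore moves every inner product to a diagonal one diag(d1, d2, d3), and it
  preserves both the ratio det/trace^2 of the (e2, e3)-block and the 4-dimensional space
  Sym_scalar_block of symmetric matrices whose (e2, e3)-block is scalar. The orbit of the
  identity lies in Sym_scalar_block and has it as tangent space; every other orbit passes
  through some diag(d1, d2, d3) with d2 \<noteq> d3, where explicit curves and the block invariant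
  identify the tangent space with the hyperplane d3 X22 = d2 X33 of the 6-dimensional space
  Sym.

  At a point Q of the orbit of the identity, the mean curvature of an orthonormal frame E_i
  with curves of accelerations A_i is the sum of the A_i - E_i Q^-1 E_i. The A_i lie in
  Sym_scalar_block because the orbit does; transporting the frame back to the identity turns
  the remaining terms into the squares of a trace-orthonormal basis of Sym_scalar_block, whose
  sum lies in Sym_scalar_block by Parseval's identity. On the other orbits an explicit
  orthonormal frame at diag(d1, d2, d3) has mean curvature H with
  d3 H22 - d2 H33 = 4 d2 d3 (d2 + d3) / (d3 - d2) \<noteq> 0, so H is not tangent.
\<close>

lemma matrix_inv_both:
  fixes A :: "'a::semiring_1^'n^'n"
  assumes "invertible A"
  shows matrix_inv_right: "A ** matrix_inv A = mat 1" and matrix_inv_left: "matrix_inv A ** A = mat 1"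
proof -
  from assms obtain B where "A ** B = mat 1 \<and> B ** A = mat 1" unfolding invertible_def by blast
  hence "A ** matrix_inv A = mat 1 \<and> matrix_inv A ** A = mat 1"
    unfolding matrix_inv_def by (rule someI)
  thus "A ** matrix_inv A = mat 1" "matrix_inv A ** A = mat 1" by auto
qed

lemma matrix_inv_unique:
  fixes A :: "'a::semiring_1^'n^'n"
  assumes "A ** B = mat 1" "B ** A = mat 1"
  shows "matrix_inv A = B"
proof -
  have "invertible A" using assms unfolding invertible_def by blast
  hence "matrix_inv A = matrix_inv A ** (A ** B)" using assms by simp
  also have "\<dots> = B" by (simp add: matrix_mul_assoc matrix_inv_left \<open>invertible A\<close>)
  finally show ?thesis .
qed

lemma invertible_matrix_inv:
  fixes A :: "'a::semiring_1^'n^'n"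
  assumes "invertible A"
  shows "invertible (matrix_inv A)"
  using matrix_inv_both[OF assms] unfolding invertible_def by blast

lemma matrix_inv_matrix_inv:
  fixes A :: "'a::semiring_1^'n^'n"
  assumes "invertible A"
  shows "matrix_inv (matrix_inv A) = A"
  by (rule matrix_inv_unique) (use matrix_inv_both[OF assms] in auto)

lemma matrix_inv_mult:
  fixes A B :: "'a::semiring_1^'n^'n"
  assumes "invertible A" "invertible B"
  shows "matrix_inv (A ** B) = matrix_inv B ** matrix_inv A"
proof (rule matrix_inv_unique)
  have "(A ** B) ** (matrix_inv B ** matrix_inv A) = A ** ((B ** matrix_inv B) ** matrix_inv A)"
    by (simp only: matrix_mul_assoc)
  thus "(A ** B) ** (matrix_inv B ** matrix_inv A) = mat 1"
    by (simp add: assms matrix_inv_right)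
  have "(matrix_inv B ** matrix_inv A) ** (A ** B) = matrix_inv B ** ((matrix_inv A ** A) ** B)"
    by (simp only: matrix_mul_assoc)
  thus "(matrix_inv B ** matrix_inv A) ** (A ** B) = mat 1"
    by (simp add: assms matrix_inv_left)
qed

lemma matrix_inv_mat1: "matrix_inv (mat 1 :: 'a::semiring_1^'n^'n) = mat 1"
  by (rule matrix_inv_unique) simp_all

lemma matrix_inv_cancel:
  fixes A :: "real^'n^'n"
  assumes "invertible A"
  shows "X ** A ** matrix_inv A = X" "X ** matrix_inv A ** A = X"
    "X ** transpose A ** transpose (matrix_inv A) = X" "X ** transpose (matrix_inv A) ** transpose A = X"
  using assms
  by (simp_all add: matrix_mul_assoc[symmetric] matrix_transpose_mul[symmetric] matrix_inv_left matrix_inv_right)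

lemma matrix_add_rdistrib: "((A + B) ** C) = (A ** C) + (B ** C)"
  by (vector matrix_matrix_mult_def sum.distrib[symmetric] field_simps)

lemma linear_matrix_sandwich: "linear (\<lambda>X::real^'n^'m. (A::real^'m^'k) ** X ** (B::real^'p^'n))"
  by (rule linearI)
    (simp_all add: matrix_add_ldistrib matrix_add_rdistrib matrix_scalar_ac scalar_matrix_assoc)

lemma has_vector_derivative_in_subspace:
  fixes \<gamma> :: "real \<Rightarrow> 'a::euclidean_space"
  assumes "subspace S" "\<And>s. \<gamma> s \<in> S" "(\<gamma> has_vector_derivative v) (at t)"
  shows "v \<in> S"
proof (rule Lim_in_closed_set)
  show "closed S" using closed_subspace[OF assms(1)] .
  show "\<forall>\<^sub>F h in at 0. (\<gamma> (t + h) - \<gamma> t) /\<^sub>R h \<in> S"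
    using assms(1,2) by (simp add: subspace_diff subspace_scale)
  show "((\<lambda>h. (\<gamma> (t + h) - \<gamma> t) /\<^sub>R h) \<longlongrightarrow> v) (at 0)"
  proof -
    have "((\<lambda>h. norm (\<gamma> (t + h) - \<gamma> t - h *\<^sub>R v) / norm h) \<longlongrightarrow> 0) (at 0)"
      using assms(3) unfolding has_vector_derivative_def has_derivative_at by simp
    hence "((\<lambda>h. norm ((\<gamma> (t + h) - \<gamma> t) /\<^sub>R h - v)) \<longlongrightarrow> 0) (at 0)"
    proof (rule Lim_transform_eventually)
      have "(\<gamma> (t + h) - \<gamma> t) /\<^sub>R h - v = (\<gamma> (t + h) - \<gamma> t - h *\<^sub>R v) /\<^sub>R h" if "h \<noteq> 0" for h
        using that by (simp add: algebra_simps)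
      thus "\<forall>\<^sub>F h in at 0. norm (\<gamma> (t + h) - \<gamma> t - h *\<^sub>R v) / norm h
                          = norm ((\<gamma> (t + h) - \<gamma> t) /\<^sub>R h - v)"
        by (auto simp: eventually_at_filter divide_inverse_commute)
    qed
    thus ?thesis by (simp add: tendsto_norm_zero_iff LIM_zero_iff)
  qed
qed simp

lemma has_vector_derivative_matrix_nth:
  fixes \<gamma> :: "real \<Rightarrow> real^'n^'m"
  assumes "(\<gamma> has_vector_derivative v) (at t)"
  shows "((\<lambda>s. \<gamma> s $ i $ j) has_real_derivative v $ i $ j) (at t)"
proof -
  have "bounded_linear (\<lambda>X::real^'n^'m. X $ i $ j)"
    using bounded_linear_compose[OF bounded_linear_vec_nth[of j] bounded_linear_vec_nth[of i]] by simp
  from bounded_linear.has_vector_derivative[OF this assms] show ?thesis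
    by (simp add: has_real_derivative_iff_has_vector_derivative)
qed

definition matrix3 ::
  "real \<Rightarrow> real \<Rightarrow> real \<Rightarrow> real \<Rightarrow> real \<Rightarrow> real \<Rightarrow> real \<Rightarrow> real \<Rightarrow> real \<Rightarrow> mat3" where
  "matrix3 a11 a12 a13 a21 a22 a23 a31 a32 a33 =
     vector [vector [a11, a12, a13], vector [a21, a22, a23], vector [a31, a32, a33]]"

lemma matrix3_nth [simp]:
  "matrix3 a11 a12 a13 a21 a22 a23 a31 a32 a33 $ 1 $ 1 = a11"
  "matrix3 a11 a12 a13 a21 a22 a23 a31 a32 a33 $ 1 $ 2 = a12"
  "matrix3 a11 a12 a13 a21 a22 a23 a31 a32 a33 $ 1 $ 3 = a13"
  "matrix3 a11 a12 a13 a21 a22 a23 a31 a32 a33 $ 2 $ 1 = a21"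
  "matrix3 a11 a12 a13 a21 a22 a23 a31 a32 a33 $ 2 $ 2 = a22"
  "matrix3 a11 a12 a13 a21 a22 a23 a31 a32 a33 $ 2 $ 3 = a23"
  "matrix3 a11 a12 a13 a21 a22 a23 a31 a32 a33 $ 3 $ 1 = a31"
  "matrix3 a11 a12 a13 a21 a22 a23 a31 a32 a33 $ 3 $ 2 = a32"
  "matrix3 a11 a12 a13 a21 a22 a23 a31 a32 a33 $ 3 $ 3 = a33"
  unfolding matrix3_def by simp_all

lemma mat3_eq_iff:
  "(A::mat3) = B \<longleftrightarrow>
     A$1$1 = B$1$1 \<and> A$1$2 = B$1$2 \<and> A$1$3 = B$1$3 \<and>
     A$2$1 = B$2$1 \<and> A$2$2 = B$2$2 \<and> A$2$3 = B$2$3 \<and>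
     A$3$1 = B$3$1 \<and> A$3$2 = B$3$2 \<and> A$3$3 = B$3$3"
  by (auto simp: vec_eq_iff forall_3)

lemma mat3_mult_nth: "((A::mat3) ** B) $ i $ j = A$i$1 * B$1$j + A$i$2 * B$2$j + A$i$3 * B$3$j"
  by (simp add: matrix_matrix_mult_def sum_3)

lemma mat3_vector_mult_nth: "((A::mat3) *v x) $ i = A$i$1 * x$1 + A$i$2 * x$2 + A$i$3 * x$3"
  by (simp add: matrix_vector_mult_def sum_3)

lemma transpose_nth: "transpose A $ i $ j = A $ j $ i"
  by (simp add: transpose_def)

lemma symmetric_mat3_iff:
  "transpose (X::mat3) = X \<longleftrightarrow> X$1$2 = X$2$1 \<and> X$1$3 = X$3$1 \<and> X$2$3 = X$3$2"
  unfolding mat3_eq_iff transpose_nth by auto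

lemma trace_mat3: "trace (A::mat3) = A$1$1 + A$2$2 + A$3$3"
  by (simp add: trace_def sum_3)

lemma inner_mat3:
  "(A::mat3) \<bullet> B = A$1$1 * B$1$1 + A$1$2 * B$1$2 + A$1$3 * B$1$3
                   + A$2$1 * B$2$1 + A$2$2 * B$2$2 + A$2$3 * B$2$3
                   + A$3$1 * B$3$1 + A$3$2 * B$3$2 + A$3$3 * B$3$3"
  by (simp add: inner_vec_def sum_3)

lemma det_mat3_first_row_zero:
  assumes "(A::mat3)$1$2 = 0" "A$1$3 = 0"
  shows "det A = A$1$1 * (A$2$2 * A$3$3 - A$2$3 * A$3$2)"
  using assms by (simp add: det_3 algebra_simps)

lemma act_mult:
  assumes "invertible g" "invertible h"
  shows "act (g ** h) X = act g (act h X)"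
  unfolding act_def using assms
  by (simp add: matrix_inv_mult matrix_transpose_mul matrix_mul_assoc)

lemma act_mat1 [simp]: "act (mat 1) X = X"
  unfolding act_def by (simp add: matrix_inv_mat1)

lemma act_matrix_inv:
  assumes "invertible g"
  shows "act (matrix_inv g) (act g X) = X" "act g (act (matrix_inv g) X) = X"
  using act_mult[OF invertible_matrix_inv[OF assms] assms, of X]
    act_mult[OF assms invertible_matrix_inv[OF assms], of X]
  by (simp_all add: assms matrix_inv_left matrix_inv_right)

lemma act_matrix_inv_eq: "invertible g \<Longrightarrow> act (matrix_inv g) X = transpose g ** X ** g"
  unfolding act_def by (simp add: matrix_inv_matrix_inv)

lemma linear_act: "linear (act g)"
  unfolding act_def by (rule linear_matrix_sandwich)

lemma matrix_inv_act:
  assumes "invertible g" "invertible P"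
  shows "matrix_inv (act g P) = g ** matrix_inv P ** transpose g"
proof (rule matrix_inv_unique)
  show "act g P ** (g ** matrix_inv P ** transpose g) = mat 1"
    unfolding act_def using assms
    by (simp add: matrix_mul_assoc matrix_inv_cancel matrix_transpose_mul[symmetric] matrix_inv_right)
  show "g ** matrix_inv P ** transpose g ** act g P = mat 1"
    unfolding act_def using assms
    by (simp add: matrix_mul_assoc matrix_inv_cancel matrix_inv_left matrix_inv_right)
qed

lemma act_mult_inv_mult:
  assumes "invertible g" "invertible P"
  shows "act g X ** matrix_inv (act g P) ** act g Y = act g (X ** matrix_inv P ** Y)"
  unfolding matrix_inv_act[OF assms] unfolding act_def using assms(1)
  by (simp add: matrix_mul_assoc matrix_inv_cancel)

lemma gmet_act:
  assumes "invertible g" "invertible P"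
  shows "gmet (act g P) (act g X) (act g Y) = gmet P X Y"
proof -
  let ?Z = "matrix_inv P ** X ** matrix_inv P ** Y"
  have "matrix_inv (act g P) ** act g X ** matrix_inv (act g P) ** act g Y = g ** (?Z ** matrix_inv g)"
    unfolding matrix_inv_act[OF assms] unfolding act_def using assms(1)
    by (simp add: matrix_mul_assoc matrix_inv_cancel)
  moreover have "trace (g ** (?Z ** matrix_inv g)) = trace (?Z ** matrix_inv g ** g)"
    by (rule trace_mul_sym)
  ultimately show ?thesis unfolding gmet_def using assms(1) by (simp add: matrix_inv_cancel)
qed

lemma gmet_mat1: "gmet (mat 1) X Y = trace (X ** Y) / 4"
  unfolding gmet_def by (simp add: matrix_inv_mat1)

lemma linear_gmet: "linear (\<lambda>X. gmet P X Y)"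
  by (rule linearI)
    (simp_all add: gmet_def matrix_add_ldistrib matrix_add_rdistrib trace_add matrix_scalar_ac
      scalar_matrix_assoc[symmetric] trace_mat3 add_divide_distrib algebra_simps)

lemma gmet_sym: "gmet P X Y = gmet P Y X"
  unfolding gmet_def using trace_mul_sym[of "matrix_inv P ** X" "matrix_inv P ** Y"]
  by (simp add: matrix_mul_assoc)

lemma gmet_scaleR: "gmet P (r *\<^sub>R X) (s *\<^sub>R Y) = r * s * gmet P X Y"
  unfolding gmet_def by (simp add: matrix_scalar_ac scalar_matrix_assoc[symmetric] trace_mat3 algebra_simps)

lemma cov_acc_scaleR: "cov_acc P (s *\<^sub>R V) (s\<^sup>2 *\<^sub>R A) = s\<^sup>2 *\<^sub>R cov_acc P V A"
  unfolding cov_acc_def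
  by (simp add: matrix_scalar_ac scalar_matrix_assoc[symmetric] scaleR_diff_right power2_eq_square)

lemma Aut_invertible: "\<phi> \<in> Aut a \<Longrightarrow> invertible \<phi>"
  unfolding Aut_def by blast

lemma Aut_mult:
  assumes "\<phi> \<in> Aut a" "\<psi> \<in> Aut a"
  shows "\<phi> ** \<psi> \<in> Aut a"
proof -
  have "invertible (\<phi> ** \<psi>)" using assms by (simp add: Aut_invertible invertible_mult)
  thus ?thesis using assms unfolding Aut_def by (simp add: matrix_vector_mul_assoc[symmetric])
qed

lemma Aut_matrix_inv:
  assumes "\<phi> \<in> Aut a"
  shows "matrix_inv \<phi> \<in> Aut a"
proof -
  have inv: "invertible \<phi>" and hom: "\<And>x y. \<phi> *v br a x y = br a (\<phi> *v x) (\<phi> *v y)"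
    using assms unfolding Aut_def by auto
  let ?\<psi> = "matrix_inv \<phi>"
  have cancel: "\<And>x. \<phi> *v (?\<psi> *v x) = x" "\<And>x. ?\<psi> *v (\<phi> *v x) = x"
    using inv by (simp_all add: matrix_vector_mul_assoc matrix_inv_left matrix_inv_right)
  have "?\<psi> *v br a x y = br a (?\<psi> *v x) (?\<psi> *v y)" for x y
  proof -
    have "?\<psi> *v br a x y = ?\<psi> *v br a (\<phi> *v (?\<psi> *v x)) (\<phi> *v (?\<psi> *v y))"
      by (simp only: cancel)
    also have "\<dots> = br a (?\<psi> *v x) (?\<psi> *v y)" by (subst hom[symmetric]) (simp only: cancel)
    finally show ?thesis .
  qed
  thus ?thesis using invertible_matrix_inv[OF inv] unfolding Aut_def by blast
qed

lemma mat1_Aut: "mat 1 \<in> Aut a"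
proof -
  have "invertible (mat 1 :: mat3)" unfolding invertible_def by (intro exI[of _ "mat 1"]) simp
  thus ?thesis unfolding Aut_def by simp
qed

lemma RAut_invertible: "g \<in> RAut a \<Longrightarrow> invertible g"
  unfolding RAut_def Aut_def by (auto intro: scalar_invertible)

lemma RAut_mult:
  assumes "g \<in> RAut a" "h \<in> RAut a"
  shows "g ** h \<in> RAut a"
proof -
  obtain c \<phi> d \<psi> where "g = c *\<^sub>R \<phi>" "h = d *\<^sub>R \<psi>" "c \<noteq> 0" "d \<noteq> 0" "\<phi> \<in> Aut a" "\<psi> \<in> Aut a"
    using assms unfolding RAut_def by blast
  moreover from this have "g ** h = (c * d) *\<^sub>R (\<phi> ** \<psi>)"
    by (simp add: matrix_scalar_ac scalar_matrix_assoc[symmetric])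
  moreover have "c * d \<noteq> 0" "\<phi> ** \<psi> \<in> Aut a" using calculation by (simp_all add: Aut_mult)
  ultimately show ?thesis unfolding RAut_def by blast
qed

lemma RAut_matrix_inv:
  assumes "g \<in> RAut a"
  shows "matrix_inv g \<in> RAut a"
proof -
  obtain c \<phi> where g: "g = c *\<^sub>R \<phi>" "c \<noteq> 0" "\<phi> \<in> Aut a"
    using assms unfolding RAut_def by blast
  have "matrix_inv g = inverse c *\<^sub>R matrix_inv \<phi>"
    using g Aut_invertible[OF g(3)]
    by (intro matrix_inv_unique)
      (simp_all add: matrix_scalar_ac scalar_matrix_assoc[symmetric] matrix_inv_left matrix_inv_right)
  moreover have "inverse c \<noteq> 0" using g(2) by simp
  ultimately show ?thesis using g(3) Aut_matrix_inv unfolding RAut_def by blast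
qed

lemma mat1_RAut: "mat 1 \<in> RAut a"
  unfolding RAut_def using mat1_Aut[of a] by (intro CollectI exI[of _ 1] exI[of _ "mat 1"]) simp

lemma mem_orbit_self: "P \<in> orbit a P"
  unfolding orbit_def using mat1_RAut by force

lemma act_mem_orbit:
  assumes "g \<in> RAut a" "Q \<in> orbit a P"
  shows "act g Q \<in> orbit a P"
proof -
  obtain h where "h \<in> RAut a" "Q = act h P" using assms(2) unfolding orbit_def by blast
  hence "act g Q = act (g ** h) P"
    using act_mult[OF RAut_invertible[OF assms(1)] RAut_invertible] by simp
  thus ?thesis unfolding orbit_def using RAut_mult[OF assms(1) \<open>h \<in> RAut a\<close>] by blast
qed

lemma congruence_mem_orbit:
  assumes "h \<in> RAut a"
  shows "transpose h ** P ** h \<in> orbit a P"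
  using act_mem_orbit[OF RAut_matrix_inv[OF assms] mem_orbit_self]
  by (simp add: act_matrix_inv_eq RAut_invertible[OF assms])

lemma orbit_subset_of_mem: "Q \<in> orbit a P \<Longrightarrow> orbit a Q \<subseteq> orbit a P"
  unfolding orbit_def[of a Q] using act_mem_orbit by blast

lemma orbit_eq_of_mem:
  assumes "Q \<in> orbit a P"
  shows "orbit a Q = orbit a P"
proof
  show "orbit a Q \<subseteq> orbit a P" using orbit_subset_of_mem[OF assms] .
  obtain g where g: "g \<in> RAut a" "Q = act g P" using assms unfolding orbit_def by blast
  have "P = act (matrix_inv g) Q" using g by (simp add: act_matrix_inv RAut_invertible)
  hence "P \<in> orbit a Q" using act_mem_orbit[OF RAut_matrix_inv[OF g(1)] mem_orbit_self] by simp
  thus "orbit a P \<subseteq> orbit a Q" by (rule orbit_subset_of_mem)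
qed

section \<open>Automorphisms of r'_{3,a}\<close>

lemma basis_nth:
  "e1$1 = 1" "e1$2 = 0" "e1$3 = 0" "e2$1 = 0" "e2$2 = 1" "e2$3 = 0" "e3$1 = 0" "e3$2 = 0" "e3$3 = 1"
  unfolding e1_def e2_def e3_def by (simp_all add: axis_def)

lemma br_nth:
  "br a x y $ 1 = 0"
  "br a x y $ 2 = (x$1 * y$2 - x$2 * y$1) * a + (x$1 * y$3 - x$3 * y$1)"
  "br a x y $ 3 = - (x$1 * y$2 - x$2 * y$1) + (x$1 * y$3 - x$3 * y$1) * a"
  unfolding br_def by (simp_all add: basis_nth)

lemma Aut_first_row:
  assumes "\<phi> \<in> Aut a"
  shows "\<phi>$1$2 = 0" "\<phi>$1$3 = 0"
proof -
  have hom: "\<And>x y. \<phi> *v br a x y = br a (\<phi> *v x) (\<phi> *v y)"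
    using assms unfolding Aut_def by blast
  have "a * \<phi>$1$2 - \<phi>$1$3 = 0"
    using arg_cong[OF hom[of e1 e2], of "\<lambda>v. v$1"]
    by (simp add: mat3_vector_mult_nth br_nth basis_nth algebra_simps)
  moreover have "\<phi>$1$2 + a * \<phi>$1$3 = 0"
    using arg_cong[OF hom[of e1 e3], of "\<lambda>v. v$1"]
    by (simp add: mat3_vector_mult_nth br_nth basis_nth algebra_simps)
  ultimately have "(a\<^sup>2 + 1) * \<phi>$1$2 = 0" by algebra
  moreover have "a\<^sup>2 + 1 \<noteq> 0" using zero_le_power2[of a] by linarith
  ultimately show "\<phi>$1$2 = 0" "\<phi>$1$3 = 0"
    using \<open>a * \<phi>$1$2 - \<phi>$1$3 = 0\<close> by simp_all
qed

lemma Aut_block: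
  assumes "\<phi> \<in> Aut a"
  shows "(\<phi>$1$1)\<^sup>2 = 1" "\<phi>$2$3 = - \<phi>$1$1 * \<phi>$3$2" "\<phi>$3$3 = \<phi>$1$1 * \<phi>$2$2"
    "\<phi>$2$2 \<noteq> 0 \<or> \<phi>$3$2 \<noteq> 0"
proof -
  have hom: "\<And>x y. \<phi> *v br a x y = br a (\<phi> *v x) (\<phi> *v y)"
    using assms unfolding Aut_def by blast
  note row1 = Aut_first_row[OF assms]
  define c p q r s where "c = \<phi>$1$1" "p = \<phi>$2$2" "q = \<phi>$3$2" "r = \<phi>$2$3" "s = \<phi>$3$3"
  have "det \<phi> \<noteq> 0" using Aut_invertible[OF assms] by (simp add: invertible_det_nz)
  hence c0: "c \<noteq> 0" and pq: "p \<noteq> 0 \<or> q \<noteq> 0"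
    unfolding det_mat3_first_row_zero[OF row1] c_p_q_r_s_def by auto
  have hom_nth: "(\<phi> *v br a x y) $ k = br a (\<phi> *v x) (\<phi> *v y) $ k" for x y k
    by (simp add: hom)
  have r1: "a * p - r = c * (a * p + q)"
    using hom_nth[of e1 e2 2] row1
    unfolding c_p_q_r_s_def mat3_vector_mult_nth br_nth basis_nth by algebra
  have r2: "a * q - s = c * (- p + a * q)"
    using hom_nth[of e1 e2 3] row1
    unfolding c_p_q_r_s_def mat3_vector_mult_nth br_nth basis_nth by algebra
  have r3: "p + a * r = c * (a * r + s)"
    using hom_nth[of e1 e3 2] row1
    unfolding c_p_q_r_s_def mat3_vector_mult_nth br_nth basis_nth by algebra
  have r4: "q + a * s = c * (- r + a * s)"
    using hom_nth[of e1 e3 3] row1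
    unfolding c_p_q_r_s_def mat3_vector_mult_nth br_nth basis_nth by algebra
  \<comment> \<open>r and s are eliminated by the first two relations; the last two then say that
    (p, q) \<noteq> 0 solves a linear system with matrix [[K, -L], [L, K]], so K^2 + L^2 = 0\<close>
  define \<alpha> where "\<alpha> = a * (1 - c)"
  have r: "r = \<alpha> * p - c * q" and s: "s = \<alpha> * q + c * p"
    using r1 r2 unfolding \<alpha>_def by algebra+
  define K L where "K = 1 - c\<^sup>2 + \<alpha>\<^sup>2" and "L = 2 * \<alpha> * c"
  have "K * p = L * q" "K * q = - L * p"
    using r3 r4 unfolding r s K_def L_def \<alpha>_def by algebra+
  hence "(K\<^sup>2 + L\<^sup>2) * p = 0" "(K\<^sup>2 + L\<^sup>2) * q = 0" by algebra+
  hence "K\<^sup>2 + L\<^sup>2 = 0" using pq by auto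
  hence "K = 0" "L = 0" by (simp_all add: sum_power2_eq_zero_iff)
  hence "\<alpha> = 0" "c\<^sup>2 = 1" using c0 unfolding K_def L_def by simp_all
  hence "c\<^sup>2 = 1" "r = - c * q" "s = c * p" using r s by simp_all
  thus "(\<phi>$1$1)\<^sup>2 = 1" "\<phi>$2$3 = - \<phi>$1$1 * \<phi>$3$2" "\<phi>$3$3 = \<phi>$1$1 * \<phi>$2$2"
    "\<phi>$2$2 \<noteq> 0 \<or> \<phi>$3$2 \<noteq> 0"
    using pq unfolding c_p_q_r_s_def by simp_all
qed

definition conformal_block_form :: "mat3 \<Rightarrow> bool" where
  "conformal_block_form N \<longleftrightarrow> N$1$2 = 0 \<and> N$1$3 = 0 \<and> N$1$1 \<noteq> 0 \<and>
     (\<exists>\<epsilon>. \<epsilon>\<^sup>2 = 1 \<and> N$2$3 = - \<epsilon> * N$3$2 \<and> N$3$3 = \<epsilon> * N$2$2) \<and> (N$2$2 \<noteq> 0 \<or> N$3$2 \<noteq> 0)"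

lemma RAut_conformal_block_form:
  assumes "g \<in> RAut a"
  shows "conformal_block_form g"
proof -
  obtain c \<phi> where g: "g = c *\<^sub>R \<phi>" "c \<noteq> 0" "\<phi> \<in> Aut a"
    using assms unfolding RAut_def by blast
  have "\<phi>$1$1 \<noteq> 0" using Aut_block(1)[OF g(3)] by auto
  thus ?thesis unfolding conformal_block_form_def g(1)
    using Aut_first_row[OF g(3)] Aut_block[OF g(3)] g(2) by (auto intro!: exI[of _ "\<phi>$1$1"])
qed

definition aut_mat :: "real \<Rightarrow> real \<Rightarrow> real \<Rightarrow> real \<Rightarrow> mat3" where
  "aut_mat w2 w3 p q = matrix3 1 0 0 w2 p (-q) w3 q p"

lemma aut_mat_Aut:
  assumes "p\<^sup>2 + q\<^sup>2 \<noteq> 0"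
  shows "aut_mat w2 w3 p q \<in> Aut a"
proof -
  have "invertible (aut_mat w2 w3 p q)"
    using assms by (simp add: invertible_det_nz det_3 aut_mat_def power2_eq_square)
  moreover have "aut_mat w2 w3 p q *v br a x y = br a (aut_mat w2 w3 p q *v x) (aut_mat w2 w3 p q *v y)"
    for x y
    unfolding vec_eq_iff forall_3 mat3_vector_mult_nth br_nth by (simp add: aut_mat_def) algebra
  ultimately show ?thesis unfolding Aut_def by blast
qed

lemma scaled_aut_mat_RAut:
  assumes "c \<noteq> 0" "p\<^sup>2 + q\<^sup>2 \<noteq> 0"
  shows "c *\<^sub>R aut_mat w2 w3 p q \<in> RAut a"
  unfolding RAut_def using aut_mat_Aut[OF assms(2)] assms(1) by blast

lemma aut_mat_RAut:
  assumes "p\<^sup>2 + q\<^sup>2 \<noteq> 0"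
  shows "aut_mat w2 w3 p q \<in> RAut a"
  using scaled_aut_mat_RAut[OF _ assms, of 1] by simp

section \<open>Invariants of the orbits\<close>

lemma congruence_block_nth:
  assumes "conformal_block_form N"
  obtains \<epsilon> n m where "\<epsilon>\<^sup>2 = 1" "n\<^sup>2 + m\<^sup>2 \<noteq> 0"
    "(transpose N ** P ** N)$2$2 = n\<^sup>2 * P$2$2 + n * m * (P$2$3 + P$3$2) + m\<^sup>2 * P$3$3"
    "(transpose N ** P ** N)$3$3 = m\<^sup>2 * P$2$2 - n * m * (P$2$3 + P$3$2) + n\<^sup>2 * P$3$3"
    "(transpose N ** P ** N)$2$3 = \<epsilon> * (- n * m * P$2$2 + n\<^sup>2 * P$2$3 - m\<^sup>2 * P$3$2 + n * m * P$3$3)"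
    "(transpose N ** P ** N)$3$2 = \<epsilon> * (- n * m * P$2$2 + n\<^sup>2 * P$3$2 - m\<^sup>2 * P$2$3 + n * m * P$3$3)"
proof -
  obtain \<epsilon> where \<epsilon>: "\<epsilon>\<^sup>2 = 1" "N$2$3 = - \<epsilon> * N$3$2" "N$3$3 = \<epsilon> * N$2$2"
    and row1: "N$1$2 = 0" "N$1$3 = 0" and nz: "N$2$2 \<noteq> 0 \<or> N$3$2 \<noteq> 0"
    using assms unfolding conformal_block_form_def by blast
  note entries = mat3_mult_nth transpose_nth row1 \<epsilon>(2,3)
  show ?thesis
  proof (rule that[of \<epsilon> "N$2$2" "N$3$2"])
    show "\<epsilon>\<^sup>2 = 1" by (fact \<epsilon>(1))
    show "(N$2$2)\<^sup>2 + (N$3$2)\<^sup>2 \<noteq> 0" using nz by (simp add: sum_power2_eq_zero_iff)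
    show "(transpose N ** P ** N)$2$2 = (N$2$2)\<^sup>2 * P$2$2 + N$2$2 * N$3$2 * (P$2$3 + P$3$2) + (N$3$2)\<^sup>2 * P$3$3"
      unfolding entries by algebra
    show "(transpose N ** P ** N)$3$3 = (N$3$2)\<^sup>2 * P$2$2 - N$2$2 * N$3$2 * (P$2$3 + P$3$2) + (N$2$2)\<^sup>2 * P$3$3"
      using \<epsilon>(1) unfolding entries by algebra
    show "(transpose N ** P ** N)$2$3 = \<epsilon> * (- N$2$2 * N$3$2 * P$2$2 + (N$2$2)\<^sup>2 * P$2$3 - (N$3$2)\<^sup>2 * P$3$2 + N$2$2 * N$3$2 * P$3$3)"
      unfolding entries by algebra
    show "(transpose N ** P ** N)$3$2 = \<epsilon> * (- N$2$2 * N$3$2 * P$2$2 + (N$2$2)\<^sup>2 * P$3$2 - (N$3$2)\<^sup>2 * P$2$3 + N$2$2 * N$3$2 * P$3$3)"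
      unfolding entries by algebra
  qed
qed

definition Sym_scalar_block :: "mat3 set" where
  "Sym_scalar_block = {X. transpose X = X \<and> X$2$2 = X$3$3 \<and> X$2$3 = 0}"

definition block_det :: "mat3 \<Rightarrow> real" where "block_det X = X$2$2 * X$3$3 - X$2$3 * X$3$2"

definition block_trace :: "mat3 \<Rightarrow> real" where "block_trace X = X$2$2 + X$3$3"

lemma mat1_Sym_scalar_block: "mat 1 \<in> Sym_scalar_block"
  by (simp add: Sym_scalar_block_def) (simp add: mat_def)

lemma subspace_Sym: "subspace Sym"
  unfolding subspace_def Sym_def symmetric_mat3_iff by simp

lemma subspace_Sym_scalar_block: "subspace Sym_scalar_block"
  unfolding subspace_def Sym_scalar_block_def symmetric_mat3_iff by simp

lemma congruence_Sym: "X \<in> Sym \<Longrightarrow> transpose N ** X ** N \<in> Sym"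
  unfolding Sym_def by (simp add: matrix_transpose_mul matrix_mul_assoc)

lemma congruence_Sym_scalar_block:
  assumes "conformal_block_form N" "X \<in> Sym_scalar_block"
  shows "transpose N ** X ** N \<in> Sym_scalar_block"
proof -
  have X: "X \<in> Sym" "X$2$2 = X$3$3" "X$2$3 = 0" "X$3$2 = 0"
    using assms(2) unfolding Sym_scalar_block_def Sym_def symmetric_mat3_iff by auto
  obtain \<epsilon> n m where
    "(transpose N ** X ** N)$2$2 = n\<^sup>2 * X$2$2 + n * m * (X$2$3 + X$3$2) + m\<^sup>2 * X$3$3"
    "(transpose N ** X ** N)$3$3 = m\<^sup>2 * X$2$2 - n * m * (X$2$3 + X$3$2) + n\<^sup>2 * X$3$3"
    "(transpose N ** X ** N)$2$3 = \<epsilon> * (- n * m * X$2$2 + n\<^sup>2 * X$2$3 - m\<^sup>2 * X$3$2 + n * m * X$3$3)"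
    by (rule congruence_block_nth[OF assms(1)])
  thus ?thesis using congruence_Sym[OF X(1)] X(2-4)
    unfolding Sym_scalar_block_def Sym_def by (simp add: algebra_simps)
qed

lemma congruence_block_invariant:
  assumes "conformal_block_form N" "P \<in> Sym"
  shows "block_det (transpose N ** P ** N) * (block_trace P)\<^sup>2
       = block_det P * (block_trace (transpose N ** P ** N))\<^sup>2"
proof -
  have P32: "P$3$2 = P$2$3" using assms(2) unfolding Sym_def symmetric_mat3_iff by simp
  obtain \<epsilon> n m where "\<epsilon>\<^sup>2 = 1"
    "(transpose N ** P ** N)$2$2 = n\<^sup>2 * P$2$2 + n * m * (P$2$3 + P$3$2) + m\<^sup>2 * P$3$3"
    "(transpose N ** P ** N)$3$3 = m\<^sup>2 * P$2$2 - n * m * (P$2$3 + P$3$2) + n\<^sup>2 * P$3$3"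
    "(transpose N ** P ** N)$2$3 = \<epsilon> * (- n * m * P$2$2 + n\<^sup>2 * P$2$3 - m\<^sup>2 * P$3$2 + n * m * P$3$3)"
    "(transpose N ** P ** N)$3$2 = \<epsilon> * (- n * m * P$2$2 + n\<^sup>2 * P$3$2 - m\<^sup>2 * P$2$3 + n * m * P$3$3)"
    by (rule congruence_block_nth[OF assms(1)])
  thus ?thesis unfolding block_det_def block_trace_def P32 by algebra
qed

lemma act_RAut_congruence:
  assumes "g \<in> RAut a"
  shows "conformal_block_form (matrix_inv g)" "act g P = transpose (matrix_inv g) ** P ** matrix_inv g"
  using RAut_conformal_block_form[OF RAut_matrix_inv[OF assms]] unfolding act_def by auto

lemma orbit_subset_Sym: "P \<in> Sym \<Longrightarrow> orbit a P \<subseteq> Sym"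
  unfolding orbit_def using act_RAut_congruence(2) congruence_Sym by auto

lemma orbit_subset_Sym_scalar_block: "P \<in> Sym_scalar_block \<Longrightarrow> orbit a P \<subseteq> Sym_scalar_block"
  unfolding orbit_def using act_RAut_congruence congruence_Sym_scalar_block by auto

lemma orbit_block_invariant:
  assumes "P \<in> Sym" "Q \<in> orbit a P"
  shows "block_det Q * (block_trace P)\<^sup>2 = block_det P * (block_trace Q)\<^sup>2"
  using assms act_RAut_congruence congruence_block_invariant unfolding orbit_def by auto

lemma act_Sym_scalar_block: "g \<in> RAut a \<Longrightarrow> X \<in> Sym_scalar_block \<Longrightarrow> act g X \<in> Sym_scalar_block"
  using act_RAut_congruence congruence_Sym_scalar_block by simp

section \<open>Tangent spaces of orbits\<close>

lemma tangent_spaceI: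
  assumes "\<And>t. \<gamma> t \<in> S" "\<gamma> 0 = Q" "(\<gamma> has_vector_derivative v) (at 0)"
  shows "v \<in> tangent_space S Q"
  unfolding tangent_space_def using assms by (intro span_base) blast

lemma subspace_tangent_space: "subspace (tangent_space S Q)"
  unfolding tangent_space_def by (rule subspace_span)

lemma tangent_space_subset:
  assumes "subspace K"
    and "\<And>v \<gamma>. \<forall>t. \<gamma> t \<in> S \<Longrightarrow> \<gamma> 0 = Q \<Longrightarrow> (\<gamma> has_vector_derivative v) (at 0) \<Longrightarrow> v \<in> K"
  shows "tangent_space S Q \<subseteq> K"
  unfolding tangent_space_def using assms by (intro span_minimal) auto

lemma tangent_space_subset_subspace:
  assumes "subspace K" "S \<subseteq> K"
  shows "tangent_space S Q \<subseteq> K"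
  using assms(1) by (rule tangent_space_subset) (use assms has_vector_derivative_in_subspace in blast)

lemma tangent_space_linear_image:
  assumes "linear f" "f ` S \<subseteq> S"
  shows "f ` tangent_space S Q \<subseteq> tangent_space S (f Q)"
proof -
  have "f v \<in> tangent_space S (f Q)"
    if "\<forall>t. \<gamma> t \<in> S" "\<gamma> 0 = Q" "(\<gamma> has_vector_derivative v) (at 0)" for v \<gamma>
  proof (rule tangent_spaceI)
    show "((\<lambda>t. f (\<gamma> t)) has_vector_derivative f v) (at 0)"
      using assms(1) that(3) by (simp add: linear_conv_bounded_linear bounded_linear.has_vector_derivative)
  qed (use assms(2) that in auto)
  hence "span (f ` {v. \<exists>\<gamma>. (\<forall>t. \<gamma> t \<in> S) \<and> \<gamma> 0 = Q \<and> (\<gamma> has_vector_derivative v) (at 0)})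
         \<subseteq> tangent_space S (f Q)"
    by (intro span_minimal[OF _ subspace_tangent_space]) blast
  thus ?thesis unfolding tangent_space_def[of S Q] span_linear_image[OF assms(1)] .
qed

lemma dim_act_image:
  assumes "invertible g"
  shows "dim (act g ` T) = dim T"
proof (rule antisym)
  show "dim (act g ` T) \<le> dim T" by (rule dim_image_le[OF linear_act])
  have "act (matrix_inv g) ` act g ` T = T" using act_matrix_inv(1)[OF assms] by (auto simp: image_image)
  thus "dim T \<le> dim (act g ` T)" using dim_image_le[OF linear_act, of "matrix_inv g" "act g ` T"] by simp
qed

lemma orbit_dim_eq_of_mem:
  assumes "Q \<in> orbit a P"
  shows "orbit_dim a Q = orbit_dim a P"
proof -
  obtain g where g: "g \<in> RAut a" "Q = act g P" using assms unfolding orbit_def by blast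
  have inv: "invertible g" "invertible (matrix_inv g)" and "P = act (matrix_inv g) Q"
    using g RAut_invertible invertible_matrix_inv act_matrix_inv by auto
  have act_orbit: "act h ` orbit a P \<subseteq> orbit a P" if "h \<in> RAut a" for h
    using act_mem_orbit[OF that] by blast
  have "act g ` tangent_space (orbit a P) P \<subseteq> tangent_space (orbit a P) Q"
    using tangent_space_linear_image[OF linear_act act_orbit[OF g(1)]] g(2) by simp
  moreover have "act (matrix_inv g) ` tangent_space (orbit a P) Q \<subseteq> tangent_space (orbit a P) P"
    using tangent_space_linear_image[OF linear_act act_orbit[OF RAut_matrix_inv[OF g(1)]]]
      \<open>P = act (matrix_inv g) Q\<close> by simp
  ultimately have "dim (tangent_space (orbit a P) Q) = dim (tangent_space (orbit a P) P)"
    using dim_subset dim_act_image[OF inv(1)] dim_act_image[OF inv(2)] by (metis antisym)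
  thus ?thesis unfolding orbit_dim_def orbit_eq_of_mem[OF assms] .
qed

definition diag3 :: "real \<Rightarrow> real \<Rightarrow> real \<Rightarrow> mat3" where
  "diag3 d1 d2 d3 = matrix3 d1 0 0 0 d2 0 0 0 d3"

definition unit11 :: mat3 where "unit11 = matrix3 1 0 0 0 0 0 0 0 0"

definition unit22 :: mat3 where "unit22 = matrix3 0 0 0 0 1 0 0 0 0"

definition unit33 :: mat3 where "unit33 = matrix3 0 0 0 0 0 0 0 0 1"

definition unit12 :: mat3 where "unit12 = matrix3 0 1 0 1 0 0 0 0 0"

definition unit13 :: mat3 where "unit13 = matrix3 0 0 1 0 0 0 1 0 0"

definition unit23 :: mat3 where "unit23 = matrix3 0 0 0 0 0 1 0 1 0"

lemmas sym_unit_defs = diag3_def unit11_def unit22_def unit33_def unit12_def unit13_def unit23_def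

lemma mat1_eq_diag3: "mat 1 = diag3 1 1 1"
  unfolding mat3_eq_iff by (simp add: mat_def diag3_def)

lemma diag3_Sym: "diag3 d1 d2 d3 \<in> Sym"
  unfolding Sym_def symmetric_mat3_iff by (simp add: diag3_def)

text \<open>Velocities and halved accelerations at diag3 d1 d2 d3 of the curves
  t \<mapsto> transpose h_t ** diag3 d1 d2 d3 ** h_t, where h_t in R^x Aut(g) scales e1, scales
  span {e2, e3}, shears e1 towards e2 or e3, or rotates and dilates span {e2, e3}, at speed s;
  each of these curves is exactly quadratic in t.\<close>
definition diag_velocity :: "real \<Rightarrow> real \<Rightarrow> real \<Rightarrow> real \<Rightarrow> nat \<Rightarrow> mat3" where
  "diag_velocity d1 d2 d3 s i =
     (if i = 0 then (s * d1) *\<^sub>R unit11 else if i = 1 then s *\<^sub>R diag3 0 d2 d3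
      else if i = 2 then (s * d2) *\<^sub>R unit12 else if i = 3 then (s * d3) *\<^sub>R unit13
      else (s * (d3 - d2)) *\<^sub>R unit23)"

definition diag_accel :: "real \<Rightarrow> real \<Rightarrow> real \<Rightarrow> real \<Rightarrow> nat \<Rightarrow> mat3" where
  "diag_accel d1 d2 d3 s i =
     (if i = 0 then (s\<^sup>2 * d1) *\<^sub>R unit11 else if i = 1 then s\<^sup>2 *\<^sub>R diag3 0 d2 d3
      else if i = 2 then (s\<^sup>2 * d2) *\<^sub>R unit11 else if i = 3 then (s\<^sup>2 * d3) *\<^sub>R unit11
      else s\<^sup>2 *\<^sub>R (d3 *\<^sub>R unit22 + d2 *\<^sub>R unit33))"

lemma diag_curve_in_orbit:
  assumes "i < 5"
  shows "diag3 d1 d2 d3 + t *\<^sub>R diag_velocity d1 d2 d3 s i + t\<^sup>2 *\<^sub>R diag_accel d1 d2 d3 s i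
         \<in> orbit a (diag3 d1 d2 d3)"
proof -
  let ?D = "diag3 d1 d2 d3"
  let ?\<gamma> = "?D + t *\<^sub>R diag_velocity d1 d2 d3 s i + t\<^sup>2 *\<^sub>R diag_accel d1 d2 d3 s i"
  define q where "q = 1 + s * t + s\<^sup>2 * t\<^sup>2"
  have "q > 0"
  proof -
    have "0 \<le> (s * t + 1/2)\<^sup>2" by simp
    thus ?thesis unfolding q_def by (simp add: power2_eq_square algebra_simps)
  qed
  hence sq: "sqrt q * sqrt q = q" "sqrt q \<noteq> 0" by simp_all
  define u where "u = s * t"
  have congr: "?\<gamma> \<in> orbit a ?D" if "h \<in> RAut a" "transpose h ** ?D ** h = ?\<gamma>" for h
    using congruence_mem_orbit[OF that(1), of ?D] unfolding that(2) .
  note nth_simps = mat3_eq_iff mat3_mult_nth transpose_nth aut_mat_def sym_unit_defs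
    diag_velocity_def diag_accel_def algebra_simps power2_eq_square
  consider "i = 0" | "i = 1" | "i = 2" | "i = 3" | "i = 4" using assms by linarith
  thus ?thesis
  proof cases
    case 1
    show ?thesis
      by (rule congr[of "sqrt q *\<^sub>R aut_mat 0 0 (1 / sqrt q) 0"])
        (use 1 sq in \<open>simp_all add: scaled_aut_mat_RAut, simp_all add: nth_simps q_def\<close>)
  next
    case 2
    show ?thesis
      by (rule congr[of "aut_mat 0 0 (sqrt q) 0"])
        (use 2 sq in \<open>simp_all add: aut_mat_RAut, simp_all add: nth_simps q_def\<close>)
  next
    case 3
    show ?thesis
      by (rule congr[of "aut_mat u 0 1 0"])
        (use 3 in \<open>simp_all add: aut_mat_RAut, simp_all add: nth_simps u_def\<close>)
  next
    case 4
    show ?thesis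
      by (rule congr[of "aut_mat 0 u 1 0"])
        (use 4 in \<open>simp_all add: aut_mat_RAut, simp_all add: nth_simps u_def\<close>)
  next
    case 5
    have "1\<^sup>2 + u\<^sup>2 \<noteq> 0" using zero_le_power2[of u] unfolding power_one by linarith
    show ?thesis
      by (rule congr[of "aut_mat 0 0 1 u"])
        (use 5 \<open>1\<^sup>2 + u\<^sup>2 \<noteq> 0\<close> in \<open>simp add: aut_mat_RAut, simp_all add: nth_simps u_def\<close>)
  qed
qed

lemma diag_curve_has_vector_derivative:
  "((\<lambda>t. D + t *\<^sub>R V + t\<^sup>2 *\<^sub>R W) has_vector_derivative (V + (2 * x) *\<^sub>R W)) (at x)"
  by (auto intro!: derivative_eq_intros)

lemma diag_velocity_tangent:
  assumes "i < 5"
  shows "diag_velocity d1 d2 d3 s i \<in> tangent_space (orbit a (diag3 d1 d2 d3)) (diag3 d1 d2 d3)"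
proof (rule tangent_spaceI[OF diag_curve_in_orbit[OF assms]])
  show "((\<lambda>t. diag3 d1 d2 d3 + t *\<^sub>R diag_velocity d1 d2 d3 s i + t\<^sup>2 *\<^sub>R diag_accel d1 d2 d3 s i)
         has_vector_derivative diag_velocity d1 d2 d3 s i) (at 0)"
    using diag_curve_has_vector_derivative[of _ _ _ 0] by simp
qed simp

definition Sym_block_ratio :: "real \<Rightarrow> real \<Rightarrow> mat3 set" where
  "Sym_block_ratio d2 d3 = {X. transpose X = X \<and> d3 * X$2$2 = d2 * X$3$3}"

lemma subspace_Sym_block_ratio: "subspace (Sym_block_ratio d2 d3)"
  unfolding subspace_def Sym_block_ratio_def symmetric_mat3_iff by (simp add: algebra_simps)

lemma Sym_scalar_block_eq_span: "Sym_scalar_block = span {unit11, diag3 0 1 1, unit12, unit13}"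
proof (rule span_subspace[symmetric])
  show "{unit11, diag3 0 1 1, unit12, unit13} \<subseteq> Sym_scalar_block"
    by (simp add: Sym_scalar_block_def symmetric_mat3_iff sym_unit_defs)
  show "Sym_scalar_block \<subseteq> span {unit11, diag3 0 1 1, unit12, unit13}"
  proof
    fix X assume "X \<in> Sym_scalar_block"
    hence "X = X$1$1 *\<^sub>R unit11 + X$2$2 *\<^sub>R diag3 0 1 1 + X$1$2 *\<^sub>R unit12 + X$1$3 *\<^sub>R unit13"
      unfolding Sym_scalar_block_def symmetric_mat3_iff by (simp add: mat3_eq_iff sym_unit_defs)
    also have "\<dots> \<in> span {unit11, diag3 0 1 1, unit12, unit13}"
      by (intro span_add span_scale span_base) auto
    finally show "X \<in> span {unit11, diag3 0 1 1, unit12, unit13}" .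
  qed
qed (rule subspace_Sym_scalar_block)

lemma dim_Sym_scalar_block: "dim Sym_scalar_block = 4"
proof -
  have "independent {unit11, diag3 0 1 1, unit12, unit13}"
    by (rule pairwise_orthogonal_independent)
      (auto simp: pairwise_def orthogonal_def inner_mat3 sym_unit_defs mat3_eq_iff)
  moreover have "card {unit11, diag3 0 1 1, unit12, unit13} = 4"
    by (simp add: sym_unit_defs mat3_eq_iff)
  ultimately show ?thesis unfolding Sym_scalar_block_eq_span by (simp add: dim_eq_card_independent)
qed

lemma Sym_block_ratio_eq_span:
  assumes "d1 \<noteq> 0" "d2 \<noteq> 0" "d3 \<noteq> 0" "d2 \<noteq> d3"
  shows "Sym_block_ratio d2 d3 = span (diag_velocity d1 d2 d3 1 ` {..<5})"
proof (rule span_subspace[symmetric])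
  let ?v = "diag_velocity d1 d2 d3 1"
  show "?v ` {..<5} \<subseteq> Sym_block_ratio d2 d3"
    by (auto simp: Sym_block_ratio_def symmetric_mat3_iff sym_unit_defs diag_velocity_def)
  show "Sym_block_ratio d2 d3 \<subseteq> span (?v ` {..<5})"
  proof
    fix X assume X: "X \<in> Sym_block_ratio d2 d3"
    have "X$3$3 = d3 * X$2$2 / d2" "d3 - d2 \<noteq> 0"
      using X assms unfolding Sym_block_ratio_def by (auto simp: field_simps)
    with X have "X = (X$1$1 / d1) *\<^sub>R ?v 0 + (X$2$2 / d2) *\<^sub>R ?v 1 + (X$1$2 / d2) *\<^sub>R ?v 2
             + (X$1$3 / d3) *\<^sub>R ?v 3 + (X$2$3 / (d3 - d2)) *\<^sub>R ?v 4"
      using assms unfolding Sym_block_ratio_def symmetric_mat3_iff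
      by (simp add: mat3_eq_iff sym_unit_defs diag_velocity_def)
    also have "\<dots> \<in> span (?v ` {..<5})"
      by (intro span_add span_scale span_base) auto
    finally show "X \<in> span (?v ` {..<5})" .
  qed
qed (rule subspace_Sym_block_ratio)

lemma dim_Sym_block_ratio:
  assumes "d2 \<noteq> 0" "d3 \<noteq> 0" "d2 \<noteq> d3"
  shows "dim (Sym_block_ratio d2 d3) = 5"
proof -
  let ?B = "diag_velocity 1 d2 d3 1 ` {..<5}"
  have "{..<5::nat} = {0, 1, 2, 3, 4}" by auto
  hence B: "?B = {unit11, diag3 0 d2 d3, d2 *\<^sub>R unit12, d3 *\<^sub>R unit13, (d3 - d2) *\<^sub>R unit23}"
    by (simp add: diag_velocity_def insert_commute)
  have "independent ?B" unfolding B using assms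
    by (intro pairwise_orthogonal_independent)
      (auto simp: pairwise_def orthogonal_def inner_mat3 sym_unit_defs mat3_eq_iff)
  moreover have "card ?B = 5" unfolding B using assms by (simp add: sym_unit_defs mat3_eq_iff)
  ultimately show ?thesis
    using Sym_block_ratio_eq_span[of 1 d2 d3] assms by (simp add: dim_eq_card_independent)
qed

lemma tangent_space_orbit_mat1_subset: "tangent_space (orbit a (mat 1)) Q \<subseteq> Sym_scalar_block"
  by (rule tangent_space_subset_subspace[OF subspace_Sym_scalar_block
        orbit_subset_Sym_scalar_block[OF mat1_Sym_scalar_block]])

lemma orbit_dim_mat1: "orbit_dim a (mat 1) = 4"
proof -
  have "{unit11, diag3 0 1 1, unit12, unit13} \<subseteq> tangent_space (orbit a (mat 1)) (mat 1)"
    using diag_velocity_tangent[of 0 1 1 1 1 a] diag_velocity_tangent[of 1 1 1 1 1 a]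
      diag_velocity_tangent[of 2 1 1 1 1 a] diag_velocity_tangent[of 3 1 1 1 1 a]
    unfolding mat1_eq_diag3 by (simp add: diag_velocity_def)
  hence "Sym_scalar_block \<subseteq> tangent_space (orbit a (mat 1)) (mat 1)"
    unfolding Sym_scalar_block_eq_span by (rule span_minimal[OF _ subspace_tangent_space])
  hence "tangent_space (orbit a (mat 1)) (mat 1) = Sym_scalar_block"
    using tangent_space_orbit_mat1_subset by blast
  thus ?thesis unfolding orbit_dim_def by (simp add: dim_Sym_scalar_block)
qed

lemma tangent_space_orbit_mat1:
  assumes "Q \<in> orbit a (mat 1)"
  shows "tangent_space (orbit a (mat 1)) Q = Sym_scalar_block"
proof (rule subspace_dim_equal[OF subspace_tangent_space subspace_Sym_scalar_block
      tangent_space_orbit_mat1_subset])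
  have "dim (tangent_space (orbit a (mat 1)) Q) = orbit_dim a Q"
    unfolding orbit_dim_def orbit_eq_of_mem[OF assms] ..
  thus "dim Sym_scalar_block \<le> dim (tangent_space (orbit a (mat 1)) Q)"
    using orbit_dim_eq_of_mem[OF assms] by (simp add: orbit_dim_mat1 dim_Sym_scalar_block)
qed

lemma tangent_space_orbit_diag_subset:
  assumes "d2 > 0" "d3 > 0" "d2 \<noteq> d3"
  shows "tangent_space (orbit a (diag3 d1 d2 d3)) (diag3 d1 d2 d3) \<subseteq> Sym_block_ratio d2 d3"
proof (rule tangent_space_subset[OF subspace_Sym_block_ratio])
  let ?D = "diag3 d1 d2 d3"
  fix v \<gamma> assume \<gamma>: "\<forall>t. \<gamma> t \<in> orbit a ?D" "\<gamma> 0 = ?D" "(\<gamma> has_vector_derivative v) (at 0)"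
  have "v \<in> Sym"
    using has_vector_derivative_in_subspace[OF subspace_Sym _ \<gamma>(3)] orbit_subset_Sym[OF diag3_Sym] \<gamma>(1)
    by blast
  define f where "f X = block_det X * (d2 + d3)\<^sup>2 - d2 * d3 * (block_trace X)\<^sup>2" for X
  have "f (\<gamma> t) = 0" for t
    using orbit_block_invariant[OF diag3_Sym[of d1 d2 d3] \<gamma>(1)[rule_format, of t]]
    by (simp add: f_def block_det_def block_trace_def diag3_def)
  hence "((\<lambda>t. f (\<gamma> t)) has_real_derivative 0) (at 0)" by simp
  moreover have "((\<lambda>t. f (\<gamma> t)) has_real_derivative
      (d3 * v$2$2 + d2 * v$3$3) * (d2 + d3)\<^sup>2 - d2 * d3 * (2 * (d2 + d3) * (v$2$2 + v$3$3))) (at 0)"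
    unfolding f_def block_det_def block_trace_def
    by (rule derivative_eq_intros has_vector_derivative_matrix_nth[OF \<gamma>(3)] refl)+
      (simp add: \<gamma>(2) diag3_def algebra_simps)
  ultimately have "(d2 + d3) * (d3 - d2) * (d3 * v$2$2 - d2 * v$3$3) = 0"
    using DERIV_unique by (fastforce simp: algebra_simps power2_eq_square)
  hence "d3 * v$2$2 = d2 * v$3$3" using assms by simp
  thus "v \<in> Sym_block_ratio d2 d3" using \<open>v \<in> Sym\<close> unfolding Sym_block_ratio_def Sym_def by simp
qed

lemma tangent_space_orbit_diag:
  assumes "d1 > 0" "d2 > 0" "d3 > 0" "d2 \<noteq> d3"
  shows "tangent_space (orbit a (diag3 d1 d2 d3)) (diag3 d1 d2 d3) = Sym_block_ratio d2 d3"
proof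
  show "tangent_space (orbit a (diag3 d1 d2 d3)) (diag3 d1 d2 d3) \<subseteq> Sym_block_ratio d2 d3"
    using tangent_space_orbit_diag_subset assms(2-4) .
  show "Sym_block_ratio d2 d3 \<subseteq> tangent_space (orbit a (diag3 d1 d2 d3)) (diag3 d1 d2 d3)"
  proof -
    have nz: "d1 \<noteq> 0" "d2 \<noteq> 0" "d3 \<noteq> 0" using assms by auto
    show ?thesis unfolding Sym_block_ratio_eq_span[OF nz assms(4)]
      by (intro span_minimal[OF _ subspace_tangent_space]) (auto intro: diag_velocity_tangent)
  qed
qed

lemma orbit_dim_diag:
  assumes "d1 > 0" "d2 > 0" "d3 > 0" "d2 \<noteq> d3"
  shows "orbit_dim a (diag3 d1 d2 d3) = 5"
  unfolding orbit_dim_def tangent_space_orbit_diag[OF assms] using assms by (simp add: dim_Sym_block_ratio)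

section \<open>Normal form and the singular orbit\<close>

lemma exists_rotation_diagonalizing:
  fixes b d e :: real
  obtains p q where "p\<^sup>2 + q\<^sup>2 = 1" "(p\<^sup>2 - q\<^sup>2) * e = p * q * (b - d)"
proof -
  obtain t where t: "cos t * e = sin t * ((b - d) / 2)"
  proof (cases "b = d")
    case True thus ?thesis using that[of "pi / 2"] by simp
  next
    case False
    define x where "x = (b - d) / 2"
    have "x \<noteq> 0" using False unfolding x_def by simp
    hence "cos (arctan (e / x)) * e = sin (arctan (e / x)) * x"
      by (simp add: sin_arctan cos_arctan field_simps)
    thus ?thesis unfolding x_def by (rule that)
  qed
  show ?thesis
  proof (rule that[of "cos (t / 2)" "sin (t / 2)"])
    show "(cos (t / 2))\<^sup>2 + (sin (t / 2))\<^sup>2 = 1" by simp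
    show "((cos (t / 2))\<^sup>2 - (sin (t / 2))\<^sup>2) * e = cos (t / 2) * sin (t / 2) * (b - d)"
      using t cos_double[of "t / 2"] sin_double[of "t / 2"] by simp
  qed
qed

lemma PD_congruence_diag_pos:
  assumes "P \<in> PD" "(h::mat3) $ 1 $ j \<noteq> 0 \<or> h $ 2 $ j \<noteq> 0 \<or> h $ 3 $ j \<noteq> 0"
  shows "(transpose h ** P ** h) $ j $ j > 0"
proof -
  have "(transpose h ** P ** h) $ j $ j = (\<chi> i. h$i$j) \<bullet> (P *v (\<chi> i. h$i$j))"
    by (simp add: mat3_mult_nth transpose_nth mat3_vector_mult_nth inner_vec_def sum_3 algebra_simps)
  moreover have "(\<chi> i. h$i$j) \<noteq> 0" using assms(2) by (auto simp: vec_eq_iff)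
  ultimately show ?thesis using assms(1) unfolding PD_def by simp
qed

lemma PD_block_det_pos:
  assumes "P \<in> PD"
  shows "P$2$2 * P$3$3 - (P$2$3)\<^sup>2 > 0"
proof -
  have pos: "\<And>x. x \<noteq> 0 \<Longrightarrow> x \<bullet> (P *v x) > 0" and "P$3$2 = P$2$3"
    using assms unfolding PD_def symmetric_mat3_iff by auto
  have "P$2$2 > 0"
    using pos[of "vector [0, 1, 0]"] by (simp add: vec_eq_iff forall_3 mat3_vector_mult_nth inner_vec_def sum_3)
  moreover have "vector [0, - P$2$3, P$2$2] \<bullet> (P *v vector [0, - P$2$3, P$2$2]) > 0"
    using pos \<open>P$2$2 > 0\<close> by (simp add: vec_eq_iff forall_3)
  hence "P$2$2 * (P$2$2 * P$3$3 - (P$2$3)\<^sup>2) > 0"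
    using \<open>P$3$2 = P$2$3\<close>
    by (simp add: mat3_vector_mult_nth inner_vec_def sum_3 power2_eq_square algebra_simps)
  ultimately show ?thesis by (simp add: zero_less_mult_iff)
qed

lemma orbit_contains_diag:
  assumes "P \<in> PD"
  obtains d1 d2 d3 where "d1 > 0" "d2 > 0" "d3 > 0" "diag3 d1 d2 d3 \<in> orbit a P"
proof -
  have sym: "P$2$1 = P$1$2" "P$3$1 = P$1$3" "P$3$2 = P$2$3"
    using assms unfolding PD_def symmetric_mat3_iff by simp_all
  define b e d where "b = P$2$2" "e = P$2$3" "d = P$3$3"
  have \<Delta>: "b * d - e\<^sup>2 \<noteq> 0" using PD_block_det_pos[OF assms] unfolding b_e_d_def by simp
  \<comment> \<open>a shear of e1 makes e1 orthogonal to span {e2, e3}; a rotation of span {e2, e3}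
    then diagonalises the remaining block\<close>
  define w2 w3 where "w2 = (e * P$3$1 - d * P$2$1) / (b * d - e\<^sup>2)"
    and "w3 = (e * P$2$1 - b * P$3$1) / (b * d - e\<^sup>2)"
  have shear: "P$2$1 + b * w2 + e * w3 = 0" "P$3$1 + e * w2 + d * w3 = 0"
    using \<Delta> unfolding w2_def w3_def by (simp_all add: field_simps) algebra+
  obtain p q where pq: "p\<^sup>2 + q\<^sup>2 = 1" "(p\<^sup>2 - q\<^sup>2) * e = p * q * (b - d)"
    by (rule exists_rotation_diagonalizing)
  define h where "h = aut_mat w2 w3 p q"
  define Q where "Q = transpose h ** P ** h"
  have "Q \<in> orbit a P" unfolding Q_def h_def using pq(1) by (intro congruence_mem_orbit aut_mat_RAut) simp
  have "Q$1$2 = 0" "Q$2$1 = 0" "Q$1$3 = 0" "Q$3$1 = 0"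
    using shear sym unfolding Q_def h_def aut_mat_def mat3_mult_nth transpose_nth b_e_d_def
    by (simp_all add: algebra_simps, algebra+)
  moreover have "Q$2$3 = 0" "Q$3$2 = 0"
    using pq(2) sym unfolding Q_def h_def aut_mat_def mat3_mult_nth transpose_nth matrix3_nth b_e_d_def
    by (simp add: power2_eq_square; algebra)+
  ultimately have "Q = diag3 (Q$1$1) (Q$2$2) (Q$3$3)" unfolding mat3_eq_iff by (simp add: diag3_def)
  moreover have "p \<noteq> 0 \<or> q \<noteq> 0" using pq(1) by auto
  hence "Q$1$1 > 0" "Q$2$2 > 0" "Q$3$3 > 0"
    unfolding Q_def using assms by (auto intro!: PD_congruence_diag_pos simp: h_def aut_mat_def)
  ultimately show ?thesis using that \<open>Q \<in> orbit a P\<close> by metis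
qed

lemma diag3_mem_orbit_mat1:
  assumes "d1 > 0" "d2 > 0"
  shows "diag3 d1 d2 d2 \<in> orbit a (mat 1)"
proof -
  let ?h = "sqrt d1 *\<^sub>R aut_mat 0 0 (sqrt d2 / sqrt d1) 0"
  have "?h \<in> RAut a" using assms by (intro scaled_aut_mat_RAut) auto
  moreover have "transpose ?h ** mat 1 ** ?h = diag3 d1 d2 d2"
    using assms by (simp add: mat3_eq_iff mat3_mult_nth transpose_nth mat_def aut_mat_def diag3_def)
  ultimately show ?thesis using congruence_mem_orbit by metis
qed

lemma orbit_PD_Sym_scalar_block:
  assumes "P \<in> PD" "P \<in> Sym_scalar_block"
  shows "orbit a P = orbit a (mat 1)"
proof -
  obtain d1 d2 d3 where d: "d1 > 0" "d2 > 0" "d3 > 0" and D: "diag3 d1 d2 d3 \<in> orbit a P"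
    using orbit_contains_diag[OF assms(1)] .
  have "diag3 d1 d2 d3 \<in> Sym_scalar_block"
    using D orbit_subset_Sym_scalar_block[OF assms(2)] by blast
  hence "d3 = d2" by (simp add: Sym_scalar_block_def diag3_def)
  thus ?thesis
    using orbit_eq_of_mem[OF D] orbit_eq_of_mem[OF diag3_mem_orbit_mat1[OF d(1,2)]] by simp
qed

lemma orbit_PD_not_Sym_scalar_block:
  assumes "P \<in> PD" "P \<notin> Sym_scalar_block"
  obtains d1 d2 d3 where "d1 > 0" "d2 > 0" "d3 > 0" "d2 \<noteq> d3" "orbit a P = orbit a (diag3 d1 d2 d3)"
proof -
  obtain d1 d2 d3 where d: "d1 > 0" "d2 > 0" "d3 > 0" and D: "diag3 d1 d2 d3 \<in> orbit a P"
    using orbit_contains_diag[OF assms(1)] .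
  have "P \<in> orbit a (diag3 d1 d2 d3)" using orbit_eq_of_mem[OF D] mem_orbit_self by blast
  moreover have "d2 = d3 \<Longrightarrow> diag3 d1 d2 d3 \<in> Sym_scalar_block"
    by (simp add: Sym_scalar_block_def symmetric_mat3_iff diag3_def)
  ultimately have "d2 \<noteq> d3" using orbit_subset_Sym_scalar_block assms(2) by blast
  thus ?thesis using that d orbit_eq_of_mem[OF D] by simp
qed

lemma orbit_ne_orbit_mat1:
  assumes "P \<notin> Sym_scalar_block"
  shows "orbit a P \<noteq> orbit a (mat 1)"
  using assms mem_orbit_self[of P a] orbit_subset_Sym_scalar_block[OF mat1_Sym_scalar_block] by blast

lemma orbit_dim_PD:
  assumes "P \<in> PD"
  shows "orbit_dim a P = (if P \<in> Sym_scalar_block then 4 else 5)"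
proof (cases "P \<in> Sym_scalar_block")
  case True
  have "P \<in> orbit a (mat 1)" using orbit_PD_Sym_scalar_block[OF assms True] mem_orbit_self by blast
  thus ?thesis using True orbit_dim_eq_of_mem orbit_dim_mat1 by simp
next
  case False
  then obtain d1 d2 d3 where d: "d1 > 0" "d2 > 0" "d3 > 0" "d2 \<noteq> d3"
    and "orbit a P = orbit a (diag3 d1 d2 d3)"
    using orbit_PD_not_Sym_scalar_block[OF assms] by blast
  hence "P \<in> orbit a (diag3 d1 d2 d3)" using mem_orbit_self by blast
  thus ?thesis using False orbit_dim_eq_of_mem orbit_dim_diag[OF d] by simp
qed

lemma diag3_PD:
  assumes "d1 > 0" "d2 > 0" "d3 > 0"
  shows "diag3 d1 d2 d3 \<in> PD"
proof -
  have "x \<bullet> (diag3 d1 d2 d3 *v x) > 0" if "x \<noteq> 0" for x :: vec3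
  proof -
    have "x$1 \<noteq> 0 \<or> x$2 \<noteq> 0 \<or> x$3 \<noteq> 0" using that by (auto simp: vec_eq_iff forall_3)
    hence "0 < d1 * (x$1)\<^sup>2 \<or> 0 < d2 * (x$2)\<^sup>2 \<or> 0 < d3 * (x$3)\<^sup>2" using assms by auto
    moreover have "0 \<le> d1 * (x$1)\<^sup>2" "0 \<le> d2 * (x$2)\<^sup>2" "0 \<le> d3 * (x$3)\<^sup>2" using assms by simp_all
    moreover have "x \<bullet> (diag3 d1 d2 d3 *v x) = d1 * (x$1)\<^sup>2 + d2 * (x$2)\<^sup>2 + d3 * (x$3)\<^sup>2"
      by (simp add: mat3_vector_mult_nth inner_vec_def sum_3 diag3_def power2_eq_square)
    ultimately show ?thesis by linarith
  qed
  thus ?thesis using diag3_Sym unfolding PD_def Sym_def by blast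
qed

lemma max_orbit_dim_eq: "max_orbit_dim a = 5"
proof -
  have "diag3 1 1 2 \<in> PD" by (rule diag3_PD) simp_all
  moreover have "diag3 1 1 2 \<notin> Sym_scalar_block" by (simp add: Sym_scalar_block_def diag3_def)
  ultimately have "5 \<in> {orbit_dim a P | P. P \<in> PD}" using orbit_dim_PD by force
  moreover have "{orbit_dim a P | P. P \<in> PD} \<subseteq> {4, 5}" using orbit_dim_PD by auto
  ultimately show ?thesis unfolding max_orbit_dim_def by (intro Max_eqI) (auto intro: finite_subset)
qed

lemma dim_Sym: "dim Sym = 6"
proof -
  let ?B = "{unit11, unit22, unit33, unit12, unit13, unit23}"
  have Sym: "Sym = span ?B"
  proof (rule span_subspace[symmetric])
    show "?B \<subseteq> Sym" by (simp add: Sym_def symmetric_mat3_iff sym_unit_defs)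
    show "Sym \<subseteq> span ?B"
    proof
      fix X assume "X \<in> Sym"
      hence "X = X$1$1 *\<^sub>R unit11 + X$2$2 *\<^sub>R unit22 + X$3$3 *\<^sub>R unit33
               + X$1$2 *\<^sub>R unit12 + X$1$3 *\<^sub>R unit13 + X$2$3 *\<^sub>R unit23"
        unfolding Sym_def symmetric_mat3_iff by (simp add: mat3_eq_iff sym_unit_defs)
      also have "\<dots> \<in> span ?B" by (intro span_add span_scale span_base) auto
      finally show "X \<in> span ?B" .
    qed
  qed (rule subspace_Sym)
  have "independent ?B"
    by (rule pairwise_orthogonal_independent)
      (auto simp: pairwise_def orthogonal_def inner_mat3 sym_unit_defs mat3_eq_iff)
  moreover have "card ?B = 6" by (simp add: sym_unit_defs mat3_eq_iff)
  ultimately show ?thesis unfolding Sym dim_span by (simp add: dim_eq_card_independent)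
qed

lemma cohomogeneity_one: "cohomogeneity_one a"
  unfolding cohomogeneity_one_def max_orbit_dim_eq dim_Sym by simp

lemma singular_orbit_iff:
  assumes "P \<in> PD"
  shows "singular_orbit a P \<longleftrightarrow> orbit a P = orbit a (mat 1)"
  using orbit_dim_PD[OF assms] orbit_PD_Sym_scalar_block[OF assms] orbit_ne_orbit_mat1
  unfolding singular_orbit_def max_orbit_dim_eq by auto

lemma singular_orbit_mat1: "singular_orbit a (mat 1)"
  unfolding singular_orbit_def max_orbit_dim_eq orbit_dim_mat1 by simp

section \<open>Minimality of the singular orbit\<close>

lemma orthonormal_expansion:
  fixes B :: "'a::real_vector \<Rightarrow> 'a \<Rightarrow> real" and E :: "nat \<Rightarrow> 'a"
  assumes lin: "\<And>Y. linear (\<lambda>X. B X Y)" and sym: "\<And>X Y. B X Y = B Y X"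
    and orth: "\<forall>i<k. \<forall>j<k. B (E i) (E j) = (if i = j then 1 else 0)"
    and U: "U \<in> span (E ` {..<k})"
  shows "(\<Sum>i<k. B (E i) U * B (E i) V) = B U V"
proof -
  have B_sum: "B (\<Sum>i<k. c i *\<^sub>R E i) Y = (\<Sum>i<k. c i * B (E i) Y)" for c Y
    using linear_sum[OF lin, of "\<lambda>i. c i *\<^sub>R E i" "{..<k}"] linear_scale[OF lin] by simp
  have "inj_on E {..<k}"
    by (rule inj_onI) (metis lessThan_iff orth zero_neq_one)
  moreover obtain u where "U = (\<Sum>v\<in>E ` {..<k}. u v *\<^sub>R v)"
    using U span_finite[of "E ` {..<k}"] by auto
  ultimately have U_eq: "U = (\<Sum>i<k. u (E i) *\<^sub>R E i)" by (simp add: sum.reindex)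
  have coeff: "B (E j) U = u (E j)" if "j < k" for j
  proof -
    have "B (E j) U = (\<Sum>i<k. u (E i) * B (E i) (E j))" unfolding sym[of "E j"] U_eq by (rule B_sum)
    also have "\<dots> = (\<Sum>i<k. if i = j then u (E i) else 0)"
      by (rule sum.cong) (use orth that in auto)
    finally show ?thesis using that by simp
  qed
  have "B U V = (\<Sum>i<k. u (E i) * B (E i) V)" unfolding U_eq by (rule B_sum)
  thus ?thesis by (simp add: coeff)
qed

lemma square_Sym_scalar_block_nth:
  assumes "X \<in> Sym_scalar_block"
  shows "(X ** X)$2$3 = X$1$2 * X$1$3" "(X ** X)$2$2 - (X ** X)$3$3 = (X$1$2)\<^sup>2 - (X$1$3)\<^sup>2"
    "X ** X \<in> Sym"
  using assms unfolding Sym_scalar_block_def Sym_def symmetric_mat3_iff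
  by (auto simp: mat3_mult_nth power2_eq_square algebra_simps)

lemma gmet_mat1_units:
  assumes "X \<in> Sym"
  shows "gmet (mat 1) X (2 *\<^sub>R unit12) = X$1$2" "gmet (mat 1) X (2 *\<^sub>R unit13) = X$1$3"
  using assms unfolding Sym_def symmetric_mat3_iff
  by (simp_all add: gmet_mat1 trace_mat3 mat3_mult_nth unit12_def unit13_def)

lemma gmet_mat1_units_orthogonal:
  "gmet (mat 1) (2 *\<^sub>R unit12) (2 *\<^sub>R unit13) = 0"
  "gmet (mat 1) (2 *\<^sub>R unit12) (2 *\<^sub>R unit12) = 2"
  "gmet (mat 1) (2 *\<^sub>R unit13) (2 *\<^sub>R unit13) = 2"
  by (simp_all add: gmet_mat1 trace_mat3 mat3_mult_nth unit12_def unit13_def)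

text \<open>For X in Sym_scalar_block, the defects (X ** X)23 and (X ** X)22 - (X ** X)33 are
  bilinear in X12 and X13, which are inner products of X with fixed elements of
  Sym_scalar_block; Parseval's identity evaluates their sums over an orthonormal basis.\<close>
lemma sum_squares_orthonormal_Sym_scalar_block:
  fixes E :: "nat \<Rightarrow> mat3"
  assumes L: "\<forall>i<k. E i \<in> Sym_scalar_block"
    and orth: "\<forall>i<k. \<forall>j<k. gmet (mat 1) (E i) (E j) = (if i = j then 1 else 0)"
    and span: "Sym_scalar_block \<subseteq> span (E ` {..<k})"
  shows "(\<Sum>i<k. E i ** E i) \<in> Sym_scalar_block"
proof -
  let ?\<sigma> = "\<Sum>i<k. E i ** E i"
  let ?U = "2 *\<^sub>R unit12" and ?V = "2 *\<^sub>R unit13"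
  have UV: "?U \<in> Sym_scalar_block" "?V \<in> Sym_scalar_block"
    by (simp_all add: Sym_scalar_block_def symmetric_mat3_iff unit12_def unit13_def)
  have parseval: "(\<Sum>i<k. gmet (mat 1) (E i) U * gmet (mat 1) (E i) W) = gmet (mat 1) U W"
    if "U \<in> Sym_scalar_block" for U W
    using orthonormal_expansion[OF linear_gmet gmet_sym orth] that span by blast
  have ES: "E i \<in> Sym" if "i < k" for i
    using L that unfolding Sym_scalar_block_def Sym_def by simp
  have "?\<sigma>$2$3 = (\<Sum>i<k. gmet (mat 1) (E i) ?U * gmet (mat 1) (E i) ?V)"
    by (simp, rule sum.cong) (use L ES in \<open>auto simp: square_Sym_scalar_block_nth gmet_mat1_units\<close>)
  hence 23: "?\<sigma>$2$3 = 0" using parseval[OF UV(1)] gmet_mat1_units_orthogonal by simp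
  have "?\<sigma>$2$2 - ?\<sigma>$3$3 = (\<Sum>i<k. gmet (mat 1) (E i) ?U * gmet (mat 1) (E i) ?U)
                          - (\<Sum>i<k. gmet (mat 1) (E i) ?V * gmet (mat 1) (E i) ?V)"
    by (simp add: sum_subtractf[symmetric], rule sum.cong)
      (use L ES in \<open>auto simp: square_Sym_scalar_block_nth gmet_mat1_units power2_eq_square\<close>)
  hence 22: "?\<sigma>$2$2 = ?\<sigma>$3$3" using parseval[OF UV(1)] parseval[OF UV(2)] gmet_mat1_units_orthogonal by simp
  have "?\<sigma> \<in> Sym"
    using L square_Sym_scalar_block_nth(3) by (intro subspace_sum[OF subspace_Sym]) auto
  thus ?thesis using 22 23 unfolding Sym_scalar_block_def Sym_def by simp
qed

lemma christoffel_sum_orbit_mat1: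
  fixes E :: "nat \<Rightarrow> mat3"
  assumes Q: "Q \<in> orbit a (mat 1)"
    and L: "\<forall>i<k. E i \<in> Sym_scalar_block" and span: "span (E ` {..<k}) = Sym_scalar_block"
    and orth: "\<forall>i<k. \<forall>j<k. gmet Q (E i) (E j) = (if i = j then 1 else 0)"
  shows "(\<Sum>i<k. E i ** matrix_inv Q ** E i) \<in> Sym_scalar_block"
proof -
  obtain g where g: "g \<in> RAut a" "Q = act g (mat 1)" using Q unfolding orbit_def by blast
  have ig: "invertible g" and inv1: "invertible (mat 1 :: mat3)" and g': "matrix_inv g \<in> RAut a"
    using g(1) RAut_invertible RAut_matrix_inv mat1_RAut by blast+
  define E' where "E' i = act (matrix_inv g) (E i)" for i
  have E: "E i = act g (E' i)" for i unfolding E'_def by (simp add: act_matrix_inv ig)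
  have L': "\<forall>i<k. E' i \<in> Sym_scalar_block" unfolding E'_def using L act_Sym_scalar_block[OF g'] by blast
  moreover have orth': "\<forall>i<k. \<forall>j<k. gmet (mat 1) (E' i) (E' j) = (if i = j then 1 else 0)"
    using orth unfolding g(2) E gmet_act[OF ig inv1] .
  moreover have span': "Sym_scalar_block \<subseteq> span (E' ` {..<k})"
  proof
    fix U assume "U \<in> Sym_scalar_block"
    hence "act g U \<in> span (E ` {..<k})" using act_Sym_scalar_block[OF g(1)] span by blast
    hence "act (matrix_inv g) (act g U) \<in> span (act (matrix_inv g) ` E ` {..<k})"
      unfolding span_linear_image[OF linear_act] by blast
    thus "U \<in> span (E' ` {..<k})" by (simp add: act_matrix_inv ig image_image E'_def)
  qed
  have "act g (\<Sum>i<k. E' i ** E' i) \<in> Sym_scalar_block"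
    by (rule act_Sym_scalar_block[OF g(1) sum_squares_orthonormal_Sym_scalar_block[OF L' orth' span']])
  moreover have "E i ** matrix_inv Q ** E i = act g (E' i ** E' i)" for i
    using act_mult_inv_mult[OF ig inv1] unfolding g(2) E by (simp add: matrix_inv_mat1)
  ultimately show ?thesis by (simp add: linear_sum[OF linear_act])
qed

lemma mean_curvature_orbit_mat1:
  fixes E :: "nat \<Rightarrow> mat3"
  assumes "Q \<in> orbit a (mat 1)"
    and "\<forall>i<k. E i \<in> Sym_scalar_block" "span (E ` {..<k}) = Sym_scalar_block"
    and "\<forall>i<k. \<forall>j<k. gmet Q (E i) (E j) = (if i = j then 1 else 0)"
    and curve: "\<And>i t. i < k \<Longrightarrow> \<gamma> i t \<in> orbit a (mat 1)"
    and speed: "\<And>i t. i < k \<Longrightarrow> (\<gamma> i has_vector_derivative \<gamma>' i t) (at t)"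
    and accel: "\<And>i. i < k \<Longrightarrow> (\<gamma>' i has_vector_derivative A i) (at 0)"
  shows "(\<Sum>i<k. cov_acc Q (E i) (A i)) \<in> Sym_scalar_block"
proof -
  have "A i \<in> Sym_scalar_block" if "i < k" for i
  proof (rule has_vector_derivative_in_subspace[OF subspace_Sym_scalar_block _ accel[OF that]])
    fix t
    show "\<gamma>' i t \<in> Sym_scalar_block"
      using orbit_subset_Sym_scalar_block[OF mat1_Sym_scalar_block] curve[OF that]
      by (intro has_vector_derivative_in_subspace[OF subspace_Sym_scalar_block _ speed[OF that]]) blast
  qed
  hence "(\<Sum>i<k. A i) \<in> Sym_scalar_block" by (intro subspace_sum[OF subspace_Sym_scalar_block]) auto
  moreover have "(\<Sum>i<k. E i ** matrix_inv Q ** E i) \<in> Sym_scalar_block"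
    using christoffel_sum_orbit_mat1 assms(1-4) .
  ultimately show ?thesis
    unfolding cov_acc_def sum_subtractf using subspace_diff[OF subspace_Sym_scalar_block] by blast
qed

lemma minimal_orbit_mat1: "minimal_submfd (orbit a (mat 1))"
  unfolding minimal_submfd_def Let_def
  by (intro ballI allI impI, simp only: tangent_space_orbit_mat1, rule mean_curvature_orbit_mat1; blast)

section \<open>The regular orbits are not minimal\<close>

lemma matrix_inv_diag3:
  assumes "d1 \<noteq> 0" "d2 \<noteq> 0" "d3 \<noteq> 0"
  shows "matrix_inv (diag3 d1 d2 d3) = diag3 (1 / d1) (1 / d2) (1 / d3)"
  by (rule matrix_inv_unique) (use assms in \<open>simp_all add: mat3_eq_iff mat3_mult_nth mat_def diag3_def\<close>)

lemma diag_velocity_scaleR: "diag_velocity d1 d2 d3 s i = s *\<^sub>R diag_velocity d1 d2 d3 1 i"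
  by (simp add: diag_velocity_def)

lemma diag_accel_scaleR: "diag_accel d1 d2 d3 s i = s\<^sup>2 *\<^sub>R diag_accel d1 d2 d3 1 i"
  by (simp add: diag_accel_def)

lemma gmet_diag_velocity:
  assumes "d1 > 0" "d2 > 0" "d3 > 0" "i < 5" "j < 5"
  shows "gmet (diag3 d1 d2 d3) (diag_velocity d1 d2 d3 1 i) (diag_velocity d1 d2 d3 1 j) =
    (if i \<noteq> j then 0 else if i = 0 then 1 / 4 else if i = 1 then 1 / 2 else if i = 2 then d2 / (2 * d1)
     else if i = 3 then d3 / (2 * d1) else (d3 - d2)\<^sup>2 / (2 * d2 * d3))"
proof -
  have "i = 0 \<or> i = 1 \<or> i = 2 \<or> i = 3 \<or> i = 4" "j = 0 \<or> j = 1 \<or> j = 2 \<or> j = 3 \<or> j = 4"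
    using assms(4,5) by auto
  moreover have "d1 \<noteq> 0" "d2 \<noteq> 0" "d3 \<noteq> 0" using assms(1-3) by auto
  ultimately show ?thesis unfolding gmet_def matrix_inv_diag3[OF \<open>d1 \<noteq> 0\<close> \<open>d2 \<noteq> 0\<close> \<open>d3 \<noteq> 0\<close>] trace_mat3 mat3_mult_nth
    by (auto simp: diag_velocity_def sym_unit_defs power2_eq_square field_simps)
qed

definition diag_frame_speed :: "real \<Rightarrow> real \<Rightarrow> real \<Rightarrow> nat \<Rightarrow> real" where
  "diag_frame_speed d1 d2 d3 i =
     1 / sqrt (gmet (diag3 d1 d2 d3) (diag_velocity d1 d2 d3 1 i) (diag_velocity d1 d2 d3 1 i))"

lemma diag_frame_speed_sq:
  assumes "d1 > 0" "d2 > 0" "d3 > 0" "d2 \<noteq> d3"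
  shows "(diag_frame_speed d1 d2 d3 0)\<^sup>2 = 4" "(diag_frame_speed d1 d2 d3 1)\<^sup>2 = 2"
    "(diag_frame_speed d1 d2 d3 2)\<^sup>2 = 2 * d1 / d2" "(diag_frame_speed d1 d2 d3 3)\<^sup>2 = 2 * d1 / d3"
    "(diag_frame_speed d1 d2 d3 4)\<^sup>2 = 2 * d2 * d3 / (d3 - d2)\<^sup>2"
  using assms by (simp_all add: diag_frame_speed_def gmet_diag_velocity power_divide)

lemma gmet_diag_velocity_pos:
  assumes "d1 > 0" "d2 > 0" "d3 > 0" "d2 \<noteq> d3" "i < 5"
  shows "gmet (diag3 d1 d2 d3) (diag_velocity d1 d2 d3 1 i) (diag_velocity d1 d2 d3 1 i) > 0"
proof -
  have "(d3 - d2)\<^sup>2 > 0" using assms(4) by simp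
  thus ?thesis using assms(1-3) gmet_diag_velocity[OF assms(1-3,5,5)] by (simp add: zero_less_mult_iff)
qed

lemma diag_frame_speed_nonzero:
  assumes "d1 > 0" "d2 > 0" "d3 > 0" "d2 \<noteq> d3" "i < 5"
  shows "diag_frame_speed d1 d2 d3 i \<noteq> 0"
  using gmet_diag_velocity_pos[OF assms] by (simp add: diag_frame_speed_def)

lemma diag_frame_orthonormal:
  assumes "d1 > 0" "d2 > 0" "d3 > 0" "d2 \<noteq> d3" "i < 5" "j < 5"
  shows "gmet (diag3 d1 d2 d3) (diag_velocity d1 d2 d3 (diag_frame_speed d1 d2 d3 i) i)
           (diag_velocity d1 d2 d3 (diag_frame_speed d1 d2 d3 j) j) = (if i = j then 1 else 0)"
proof (cases "i = j")
  case True
  let ?c = "gmet (diag3 d1 d2 d3) (diag_velocity d1 d2 d3 1 i) (diag_velocity d1 d2 d3 1 i)"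
  have "?c > 0" by (rule gmet_diag_velocity_pos[OF assms(1-5)])
  hence "1 / sqrt ?c * (1 / sqrt ?c) * ?c = 1" by (simp add: field_simps)
  thus ?thesis unfolding True diag_velocity_scaleR[of _ _ _ "diag_frame_speed _ _ _ _"] gmet_scaleR
    by (simp add: diag_frame_speed_def)
next
  case False
  thus ?thesis unfolding diag_velocity_scaleR[of _ _ _ "diag_frame_speed _ _ _ _"] gmet_scaleR
    using gmet_diag_velocity[OF assms(1-3,5,6)] by simp
qed

lemma diag_frame_span:
  assumes "d1 > 0" "d2 > 0" "d3 > 0" "d2 \<noteq> d3"
  shows "span ((\<lambda>i. diag_velocity d1 d2 d3 (diag_frame_speed d1 d2 d3 i) i) ` {..<5})
         = Sym_block_ratio d2 d3"
proof -
  let ?E = "\<lambda>i. diag_velocity d1 d2 d3 (diag_frame_speed d1 d2 d3 i) i"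
  have nz: "d1 \<noteq> 0" "d2 \<noteq> 0" "d3 \<noteq> 0" using assms by auto
  have "?E ` {..<5} \<subseteq> span (diag_velocity d1 d2 d3 1 ` {..<5})"
  proof
    fix X assume "X \<in> ?E ` {..<5}"
    then obtain i where "i < 5" "X = diag_frame_speed d1 d2 d3 i *\<^sub>R diag_velocity d1 d2 d3 1 i"
      by (auto simp: diag_velocity_scaleR[of _ _ _ "diag_frame_speed _ _ _ _"])
    thus "X \<in> span (diag_velocity d1 d2 d3 1 ` {..<5})" by (simp add: span_scale span_base)
  qed
  moreover have "diag_velocity d1 d2 d3 1 ` {..<5} \<subseteq> span (?E ` {..<5})"
  proof
    fix X assume "X \<in> diag_velocity d1 d2 d3 1 ` {..<5}"
    then obtain i where i: "i < 5" "X = diag_velocity d1 d2 d3 1 i" by blast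
    hence "X = (1 / diag_frame_speed d1 d2 d3 i) *\<^sub>R ?E i"
      using diag_frame_speed_nonzero[OF assms] by (simp add: diag_velocity_scaleR[of _ _ _ "diag_frame_speed _ _ _ _"])
    thus "X \<in> span (?E ` {..<5})" using i(1) by (simp add: span_scale span_base)
  qed
  ultimately show ?thesis unfolding Sym_block_ratio_eq_span[OF nz assms(4)] span_eq by blast
qed

text \<open>Within Sym, the functional X \<mapsto> d3 * X22 - d2 * X33 vanishes exactly on the tangent
  space Sym_block_ratio d2 d3, so it detects the normal component of the mean curvature.\<close>
lemma diag_cov_acc_ratio_defect:
  assumes "d1 > 0" "d2 > 0" "d3 > 0" "i < 5"
  defines "K \<equiv> cov_acc (diag3 d1 d2 d3) (diag_velocity d1 d2 d3 1 i) (2 *\<^sub>R diag_accel d1 d2 d3 1 i)"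
  shows "d3 * K$2$2 - d2 * K$3$3 =
    (if i = 2 then - d3 * d2\<^sup>2 / d1 else if i = 3 then d2 * d3\<^sup>2 / d1
     else if i = 4 then 2 * (d3\<^sup>2 - d2\<^sup>2) else 0)"
proof -
  have nz: "d1 \<noteq> 0" "d2 \<noteq> 0" "d3 \<noteq> 0" using assms(1-3) by auto
  have "i = 0 \<or> i = 1 \<or> i = 2 \<or> i = 3 \<or> i = 4" using assms(4) by auto
  thus ?thesis using nz unfolding K_def cov_acc_def matrix_inv_diag3[OF nz]
    by (auto simp: mat3_mult_nth diag_velocity_def diag_accel_def sym_unit_defs power2_eq_square field_simps)
qed

lemma diag_frame_mean_curvature_ratio_defect:
  assumes "d1 > 0" "d2 > 0" "d3 > 0" "d2 \<noteq> d3"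
  defines "s \<equiv> diag_frame_speed d1 d2 d3"
  defines "H \<equiv> \<Sum>i<5. cov_acc (diag3 d1 d2 d3) (diag_velocity d1 d2 d3 (s i) i)
                                         (2 *\<^sub>R diag_accel d1 d2 d3 (s i) i)"
  shows "d3 * H$2$2 - d2 * H$3$3 = 4 * d2 * d3 * (d2 + d3) / (d3 - d2)"
proof -
  define K where "K i = cov_acc (diag3 d1 d2 d3) (diag_velocity d1 d2 d3 1 i) (2 *\<^sub>R diag_accel d1 d2 d3 1 i)"
    for i
  have "H = (\<Sum>i<5. (s i)\<^sup>2 *\<^sub>R K i)"
    unfolding H_def K_def diag_velocity_scaleR[of _ _ _ "s _"] diag_accel_scaleR[of _ _ _ "s _"]
    by (simp add: cov_acc_scaleR[symmetric] scaleR_scaleR mult.commute)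
  hence "d3 * H$2$2 - d2 * H$3$3 = (\<Sum>i<5. (s i)\<^sup>2 * (d3 * K i$2$2 - d2 * K i$3$3))"
    by (simp add: sum_distrib_left sum_subtractf[symmetric] algebra_simps)
  also have "\<dots> = (s 2)\<^sup>2 * (- d3 * d2\<^sup>2 / d1) + (s 3)\<^sup>2 * (d2 * d3\<^sup>2 / d1) + (s 4)\<^sup>2 * (2 * (d3\<^sup>2 - d2\<^sup>2))"
    using diag_cov_acc_ratio_defect[OF assms(1-3)] unfolding K_def by (simp add: eval_nat_numeral)
  also have "\<dots> = 4 * d2 * d3 * (d2 + d3) / (d3 - d2)"
  proof -
    have "(s 2)\<^sup>2 * (- d3 * d2\<^sup>2 / d1) = - 2 * d2 * d3" "(s 3)\<^sup>2 * (d2 * d3\<^sup>2 / d1) = 2 * d2 * d3"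
      using assms(1-3) unfolding s_def diag_frame_speed_sq[OF assms(1-4)]
      by (simp_all add: power2_eq_square field_simps)
    moreover have "(s 4)\<^sup>2 * (2 * (d3\<^sup>2 - d2\<^sup>2)) = 4 * d2 * d3 * (d2 + d3) / (d3 - d2)"
    proof -
      define x where "x = d3 - d2"
      have "x \<noteq> 0" "d3 = d2 + x" using assms(4) unfolding x_def by auto
      thus ?thesis unfolding s_def diag_frame_speed_sq[OF assms(1-4)] x_def[symmetric]
        by (simp add: power2_eq_square field_simps)
    qed
    ultimately show ?thesis by simp
  qed
  finally show ?thesis .
qed

lemma not_minimal_orbit_diag:
  assumes d: "d1 > 0" "d2 > 0" "d3 > 0" "d2 \<noteq> d3"
  shows "\<not> minimal_submfd (orbit a (diag3 d1 d2 d3))"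
proof
  let ?D = "diag3 d1 d2 d3"
  define E W where "E i = diag_velocity d1 d2 d3 (diag_frame_speed d1 d2 d3 i) i"
    and "W i = diag_accel d1 d2 d3 (diag_frame_speed d1 d2 d3 i) i" for i
  define \<gamma> \<gamma>' A where "\<gamma> i t = ?D + t *\<^sub>R E i + t\<^sup>2 *\<^sub>R W i" and "\<gamma>' i t = E i + (2 * t) *\<^sub>R W i"
    and "A i = 2 *\<^sub>R W i" for i t
  have T: "tangent_space (orbit a ?D) ?D = Sym_block_ratio d2 d3"
    by (rule tangent_space_orbit_diag[OF d])
  have k: "dim (Sym_block_ratio d2 d3) = 5" using d by (simp add: dim_Sym_block_ratio)
  assume "minimal_submfd (orbit a ?D)"
  note mean_curvature_tangent =
    bspec[OF this[unfolded minimal_submfd_def Let_def] mem_orbit_self, unfolded T k, rule_format]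
  have "(\<Sum>i<5. cov_acc ?D (E i) (A i)) \<in> Sym_block_ratio d2 d3"
  proof (rule mean_curvature_tangent, intro conjI)
    show "\<forall>i<5. E i \<in> Sym_block_ratio d2 d3"
      unfolding E_def T[symmetric] by (blast intro: diag_velocity_tangent)
    show "span (E ` {..<5}) = Sym_block_ratio d2 d3"
      unfolding E_def by (rule diag_frame_span[OF d])
    show "\<forall>i<5. \<forall>j<5. gmet ?D (E i) (E j) = (if i = j then 1 else 0)"
      unfolding E_def using diag_frame_orthonormal[OF d] by blast
    show "\<forall>i<5. (\<forall>t. \<gamma> i t \<in> orbit a ?D) \<and> \<gamma> i 0 = ?D \<and>
                (\<forall>t. (\<gamma> i has_vector_derivative \<gamma>' i t) (at t)) \<and>
                \<gamma>' i 0 = E i \<and> (\<gamma>' i has_vector_derivative A i) (at 0)"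
      unfolding \<gamma>_def \<gamma>'_def A_def E_def W_def
      by (auto intro!: diag_curve_in_orbit diag_curve_has_vector_derivative derivative_eq_intros)
  qed
  hence "d3 * (\<Sum>i<5. cov_acc ?D (E i) (A i))$2$2 - d2 * (\<Sum>i<5. cov_acc ?D (E i) (A i))$3$3 = 0"
    unfolding Sym_block_ratio_def by simp
  moreover have "4 * d2 * d3 * (d2 + d3) / (d3 - d2) \<noteq> 0" using d by simp
  ultimately show False
    using diag_frame_mean_curvature_ratio_defect[OF d] unfolding A_def E_def W_def by simp
qed

lemma minimal_orbit_iff:
  assumes "P \<in> PD"
  shows "minimal_submfd (orbit a P) \<longleftrightarrow> orbit a P = orbit a (mat 1)"
proof (cases "P \<in> Sym_scalar_block")
  case True
  thus ?thesis using orbit_PD_Sym_scalar_block[OF assms] minimal_orbit_mat1 by simp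
next
  case False
  then obtain d1 d2 d3 where "d1 > 0" "d2 > 0" "d3 > 0" "d2 \<noteq> d3"
    and "orbit a P = orbit a (diag3 d1 d2 d3)"
    using orbit_PD_not_Sym_scalar_block[OF assms] by blast
  thus ?thesis using not_minimal_orbit_diag[of d1 d2 d3 a] orbit_ne_orbit_mat1[OF False, of a] by simp
qed

theorem proposition5p4:
  fixes a :: real
  assumes "a \<ge> 0"
  shows "cohomogeneity_one a
       \<and> singular_orbit a (mat 1)
       \<and> (\<forall>P \<in> PD. singular_orbit a P \<longleftrightarrow> orbit a P = orbit a (mat 1))
       \<and> minimal_submfd (orbit a (mat 1))
       \<and> (\<forall>P \<in> PD. minimal_submfd (orbit a P) \<longleftrightarrow> orbit a P = orbit a (mat 1))"
  using cohomogeneity_one singular_orbit_mat1 singular_orbit_iff minimal_orbit_mat1 minimal_orbit_iff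
  by blast

end
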